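(* Let $\mu^\pm$ be probability measures on $\mathbb{R}^d$ with compact supports $X^\pm$, and let $c\in\mathscr{C}(X^-\times X^+)$. Then for every $\varepsilon>0$, \[v_\varepsilon'=\mathrm{Ent}(\gamma_\varepsilon\,|\,\mu^-\otimes\mu^+).\] Moreover, if there exists $\gamma_0\in\mathsf{Opt}(\mu^-,\mu^+)$ with $\mathrm{Ent}(\gamma_0\,|\,\mu^-\otimes\mu^+)<+\infty$, then $\varepsilon\mapsto v_\varepsilon$ belongs to $\mathscr{C}^1([0,+\infty))$, its right derivative at $\varepsilon=0$ is \[v'_\varepsilon|_{\varepsilon=0}=\inf_{\gamma\in\mathsf{Opt}(\mu^-,\mu^+)}\mathrm{Ent}(\gamma\,|\,\mu^-\otimes\mu^+),\] i.e. $v_\varepsilon-v_0=\varepsilon\inf_{\gamma\in\mathsf{Opt}(\mu^-,\mu^+)}\mathrm{Ent}(\gamma\,|\,\mu^-\otimes\mu^+)+o(\varepsilon)$ as $\varepsilon\downarrow 0$, and $\gamma_\varepsilon$ converges narrowly as $\varepsilon\downarrow0$ to the unique coupling $\gamma^\ast\in\mathsf{Opt}(\mu^-,\mu^+)$ of minimal entropy, $\gamma^\ast=\operatorname{argmin}_{\gamma\in\mathsf{Opt}(\mu^-,\mu^+)}\mathrm{Ent}(\gamma\,|\,\mu^-\otimes\mu^+)$.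
   Context: Let $\Pi(\mu^-,\mu^+)$ be the set of probability measures on $X^-\times X^+$ with marginals $\mu^-$ and $\mu^+$. For probability measures $p,q$, $\mathrm{Ent}(p\,|\,q)=\int \rho\log\rho\,\mathrm{d}q$ if $p=\rho q$, and $+\infty$ otherwise. For $\varepsilon>0$, $v_\varepsilon \coloneqq \inf_{\gamma\in\Pi(\mu^-,\mu^+)}\{\int c\,\mathrm{d}\gamma + \varepsilon\,\mathrm{Ent}(\gamma\,|\,\mu^-\otimes\mu^+)\}$, whose (unique) minimizer is denoted $\gamma_\varepsilon$; $v_0\coloneqq \inf_{\gamma\in\Pi(\mu^-,\mu^+)}\int c\,\mathrm{d}\gamma$, and $\mathsf{Opt}(\mu^-,\mu^+)$ denotes the set of minimizers of this last problem. *)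

theory Defs
  imports "HOL-Probability.Probability"
begin

definition mu_support :: "'a::metric_space measure \<Rightarrow> 'a set" where
  "mu_support M = {x. \<forall>e>0. emeasure M (ball x e) > 0}"

text \<open>Since q is a probability measure in all uses, the negative part of rho log rho is
  integrable, so non-integrability means the integral is +infinity.\<close>
definition rel_ent :: "'b measure \<Rightarrow> 'b measure \<Rightarrow> ereal" where
  "rel_ent p q =
     (if sets p = sets q \<and> absolutely_continuous q p \<and>
         integrable q (\<lambda>x. enn2real (RN_deriv q p x) * ln (enn2real (RN_deriv q p x)))
      then ereal (\<integral>x. enn2real (RN_deriv q p x) * ln (enn2real (RN_deriv q p x)) \<partial>q)
      else \<infinity>)"

definition couplings :: "'a measure \<Rightarrow> 'b measure \<Rightarrow> ('a \<times> 'b) measure set" where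
  "couplings M N = {\<gamma>. prob_space \<gamma> \<and> sets \<gamma> = sets (M \<Otimes>\<^sub>M N) \<and>
                        distr \<gamma> M fst = M \<and> distr \<gamma> N snd = N}"

text \<open>Transport cost; c is only given on X^- x X^+ (the supports), so we integrate over that set
  (which carries full mass for every coupling).\<close>
definition ot_cost :: "'a::metric_space measure \<Rightarrow> 'a measure \<Rightarrow> ('a \<times> 'a \<Rightarrow> real)
                        \<Rightarrow> ('a \<times> 'a) measure \<Rightarrow> real" where
  "ot_cost M N c \<gamma> = (LINT z : mu_support M \<times> mu_support N | \<gamma>. c z)"

definition ent_obj :: "'a::metric_space measure \<Rightarrow> 'a measure \<Rightarrow> ('a \<times> 'a \<Rightarrow> real)
                        \<Rightarrow> real \<Rightarrow> ('a \<times> 'a) measure \<Rightarrow> ereal" where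
  "ent_obj M N c \<epsilon> \<gamma> = ereal (ot_cost M N c \<gamma>) + ereal \<epsilon> * rel_ent \<gamma> (M \<Otimes>\<^sub>M N)"

text \<open>v_eps (for eps = 0 this is the unregularised value v_0, since 0 * infinity = 0 in ereal).\<close>
definition ot_val :: "'a::metric_space measure \<Rightarrow> 'a measure \<Rightarrow> ('a \<times> 'a \<Rightarrow> real)
                        \<Rightarrow> real \<Rightarrow> real" where
  "ot_val M N c \<epsilon> = real_of_ereal (INF \<gamma>\<in>couplings M N. ent_obj M N c \<epsilon> \<gamma>)"

definition ent_plan :: "'a::metric_space measure \<Rightarrow> 'a measure \<Rightarrow> ('a \<times> 'a \<Rightarrow> real)
                        \<Rightarrow> real \<Rightarrow> ('a \<times> 'a) measure" where
  "ent_plan M N c \<epsilon> = (THE \<gamma>. \<gamma> \<in> couplings M N \<and>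
       ent_obj M N c \<epsilon> \<gamma> = (INF \<gamma>'\<in>couplings M N. ent_obj M N c \<epsilon> \<gamma>'))"

definition opt_plans :: "'a::metric_space measure \<Rightarrow> 'a measure \<Rightarrow> ('a \<times> 'a \<Rightarrow> real)
                        \<Rightarrow> ('a \<times> 'a) measure set" where
  "opt_plans M N c = {\<gamma> \<in> couplings M N. \<forall>\<gamma>'\<in>couplings M N. ot_cost M N c \<gamma> \<le> ot_cost M N c \<gamma>'}"

definition narrow_tendsto :: "('i \<Rightarrow> 'b::topological_space measure) \<Rightarrow> 'b measure \<Rightarrow> 'i filter \<Rightarrow> bool" where
  "narrow_tendsto P Q F \<longleftrightarrow>
     (\<forall>f :: 'b \<Rightarrow> real. continuous_on UNIV f \<and> bounded (range f) \<longrightarrow>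
        ((\<lambda>i. \<integral>x. f x \<partial>(P i)) \<longlongrightarrow> (\<integral>x. f x \<partial>Q)) F)"

end

(* Couplings of finite entropy are the densities rho with respect to mu^- x mu^+ that have the
   right marginals and finite entropy Ent rho = int rho ln rho; on them the entropic objective is
   Cost rho + eps Ent rho. The pointwise inequality (a - b)^2 <= 4 (a + b) [(a ln a + b ln b)/2 -
   m ln m], m = (a + b)/2, integrates to ||rho - sigma||_1^2 <= 8 [(Ent rho + Ent sigma)/2 -
   Ent ((rho + sigma)/2)]: Ent is uniformly convex for the L^1 distance. Hence minimising sequences
   are L^1-Cauchy, and completeness of L^1 together with Fatou's lemma yields a minimiser rho_eps,
   unique by the same inequality.

   Being an infimum of affine functions of eps, v is concave with supergradient Ent rho_eps at eps.
   Uniform convexity turns the supergradient inequalities into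
   eps ||rho_eps - rho_x||_1^2 <= 4 (eps - x) (Ent rho_x - Ent rho_eps), so eps -> rho_eps is
   L^1-continuous, the supergradient is continuous, and it is the derivative of v.

   If some optimal plan has finite entropy, Ent rho_eps increases to a finite limit as eps -> 0, the
   same estimate makes rho_eps converge in L^1, and the limit is the optimal plan of least entropy;
   its entropy is the right derivative at 0. L^1 convergence of the densities gives narrow
   convergence of the plans. *)

theory Submission
  imports Defs "HOL-Real_Asymp.Real_Asymp"
begin

section \<open>The function \<open>x ln x\<close>\<close>

lemma xlnx_ge_minus_one:
  fixes x :: real
  assumes "0 \<le> x"
  shows "x - 1 \<le> x * ln x"
proof (cases "x = 0")
  case False
  with assms have "ln (1 / x) \<le> 1 / x - 1"
    by (intro ln_le_minus_one) simp
  with False assms show ?thesis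
    by (simp add: ln_div field_simps)
qed simp

lemma continuous_on_xlnx: "continuous_on {0..} (\<lambda>x::real. x * ln x)"
  unfolding continuous_on_def
proof
  fix x :: real assume "x \<in> {0..}"
  show "((\<lambda>x. x * ln x) \<longlongrightarrow> x * ln x) (at x within {0..})"
  proof (cases "x = 0")
    case True
    have "((\<lambda>x::real. x * ln x) \<longlongrightarrow> 0) (at_right 0)" by real_asymp
    then show ?thesis using True by (simp add: at_within_Ici_at_right)
  next
    case False
    with \<open>x \<in> {0..}\<close> have "isCont (\<lambda>x. x * ln x) x"
      by (auto intro!: continuous_intros)
    then show ?thesis using continuous_at_imp_continuous_within continuous_within by blast
  qed
qed

lemma ln_one_plus_minus_ln_one_minus_ge:
  fixes t :: real
  assumes "0 \<le> t" "t < 1"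
  shows "2 * t \<le> ln (1 + t) - ln (1 - t)"
proof -
  let ?f = "\<lambda>x::real. ln (1 + x) - ln (1 - x) - 2 * x"
  have "?f 0 \<le> ?f t"
  proof (rule DERIV_nonneg_imp_nondecreasing[OF assms(1)])
    fix x assume x: "0 \<le> x" "x \<le> t"
    with assms have "(?f has_real_derivative 1 / (1 + x) + 1 / (1 - x) - 2) (at x)"
      by (auto intro!: derivative_eq_intros)
    moreover have "2 \<le> 1 / (1 + x) + 1 / (1 - x)"
    proof -
      have "0 < (1 + x) * (1 - x)"
        using x assms by (intro mult_pos_pos) simp_all
      moreover have "(1 + x) * (1 - x) \<le> 1"
        by (simp add: algebra_simps)
      moreover have "1 / (1 + x) + 1 / (1 - x) = 2 / ((1 + x) * (1 - x))"
        using x assms by (simp add: field_simps)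
      ultimately show ?thesis by (simp add: le_divide_eq)
    qed
    ultimately show "\<exists>y. (?f has_real_derivative y) (at x) \<and> 0 \<le> y" by auto
  qed
  then show ?thesis by simp
qed

lemma sq_le_xlnx_one_plus_minus:
  fixes t :: real
  assumes "\<bar>t\<bar> \<le> 1"
  shows "t\<^sup>2 \<le> (1 + t) * ln (1 + t) + (1 - t) * ln (1 - t)"
proof -
  let ?f = "\<lambda>x::real. (1 + x) * ln (1 + x) + (1 - x) * ln (1 - x) - x\<^sup>2"
  have nonneg: "0 \<le> ?f s" if "0 \<le> s" "s \<le> 1" for s
  proof (cases "s = 1")
    case True
    then show ?thesis using ln2_ge_two_thirds by simp
  next
    case False
    with that have "?f 0 \<le> ?f s"
    proof (intro DERIV_nonneg_imp_nondecreasing[OF \<open>0 \<le> s\<close>])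
      fix x assume x: "0 \<le> x" "x \<le> s"
      with that False have "x < 1" by simp
      then have "1 + x \<noteq> 0" "1 - x \<noteq> 0" using x by simp_all
      with x \<open>x < 1\<close> have "(?f has_real_derivative ln (1 + x) - ln (1 - x) - 2 * x) (at x)"
        by (auto intro!: derivative_eq_intros)
      moreover have "0 \<le> ln (1 + x) - ln (1 - x) - 2 * x"
        using ln_one_plus_minus_ln_one_minus_ge[of x] x that False by simp
      ultimately show "\<exists>y. (?f has_real_derivative y) (at x) \<and> 0 \<le> y" by auto
    qed
    then show ?thesis by simp
  qed
  show ?thesis
  proof (cases "0 \<le> t")
    case True
    then show ?thesis using nonneg[of t] assms by simp
  next
    case False
    then show ?thesis using nonneg[of "- t"] assms by (simp add: add.commute)
  qed
qed

definition xlnx_gap :: "real \<Rightarrow> real \<Rightarrow> real" where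
  "xlnx_gap a b = (a * ln a + b * ln b) / 2 - (a + b) / 2 * ln ((a + b) / 2)"

lemma sq_diff_le_xlnx_gap:
  fixes a b :: real
  assumes "0 \<le> a" "0 \<le> b"
  shows "(a - b)\<^sup>2 \<le> 4 * (a + b) * xlnx_gap a b"
proof (cases "a + b = 0")
  case False
  define m t where "m = (a + b) / 2" and "t = (a - b) / (a + b)"
  have m: "0 < m" using False assms by (simp add: m_def)
  have a: "a = m * (1 + t)" and b: "b = m * (1 - t)"
    using False by (simp_all add: m_def t_def field_simps)
  have t: "\<bar>t\<bar> \<le> 1"
    using False assms by (simp add: t_def abs_divide divide_le_eq_1)
  have xlnx_scale: "m * s * ln (m * s) = m * s * ln m + m * (s * ln s)" if "0 \<le> s" for s
    using m that by (cases "s = 0") (simp_all add: ln_mult algebra_simps)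
  have "a * ln a = m * (1 + t) * ln m + m * ((1 + t) * ln (1 + t))"
    unfolding a using xlnx_scale[of "1 + t"] t by simp
  moreover have "b * ln b = m * (1 - t) * ln m + m * ((1 - t) * ln (1 - t))"
    unfolding b using xlnx_scale[of "1 - t"] t by simp
  moreover have "xlnx_gap a b = (a * ln a + b * ln b) / 2 - m * ln m"
    by (simp add: xlnx_gap_def m_def)
  ultimately have "xlnx_gap a b = m / 2 * ((1 + t) * ln (1 + t) + (1 - t) * ln (1 - t))"
    by (simp add: field_simps)
  then have "m / 2 * t\<^sup>2 \<le> xlnx_gap a b"
    using sq_le_xlnx_one_plus_minus[OF t] m by simp
  moreover have "(a - b)\<^sup>2 = 4 * (a + b) * (m / 2 * t\<^sup>2)"
  proof -
    have "a - b = (a + b) * t" using False by (simp add: t_def)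
    then have "(a - b)\<^sup>2 = (a + b)\<^sup>2 * t\<^sup>2" by (simp add: power_mult_distrib)
    then show ?thesis by (simp add: m_def power2_eq_square)
  qed
  moreover have "0 \<le> 4 * (a + b)" using assms by simp
  ultimately show ?thesis by (metis mult_left_mono)
qed (use assms in simp)

lemma xlnx_gap_nonneg:
  fixes a b :: real
  assumes "0 \<le> a" "0 \<le> b"
  shows "0 \<le> xlnx_gap a b"
proof (cases "a + b = 0")
  case True
  with assms have "a = 0" "b = 0" by auto
  then show ?thesis by (simp add: xlnx_gap_def)
next
  case False
  have "0 \<le> 4 * (a + b) * xlnx_gap a b"
    using sq_diff_le_xlnx_gap[OF assms] zero_le_power2[of "a - b"] by linarith
  with False assms show ?thesis by (simp add: zero_le_mult_iff)
qed

lemma abs_diff_le_xlnx_gap: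
  fixes a b l :: real
  assumes "0 \<le> a" "0 \<le> b" "0 < l"
  shows "\<bar>a - b\<bar> \<le> 2 * xlnx_gap a b / l + l * (a + b) / 2"
proof (cases "a + b = 0")
  case True
  with assms have "a = 0" "b = 0" by auto
  then show ?thesis by (simp add: xlnx_gap_def)
next
  case False
  have "2 * l * (a + b) * \<bar>a - b\<bar> \<le> (a - b)\<^sup>2 + (l * (a + b))\<^sup>2"
    using sum_squares_bound[of "\<bar>a - b\<bar>" "l * (a + b)"] by (simp add: algebra_simps)
  also have "\<dots> \<le> 4 * (a + b) * xlnx_gap a b + (l * (a + b))\<^sup>2"
    using sq_diff_le_xlnx_gap[OF assms(1,2)] by simp
  also have "\<dots> = 2 * l * (a + b) * (2 * xlnx_gap a b / l + l * (a + b) / 2)"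
    using assms by (simp add: field_simps power2_eq_square)
  finally show ?thesis
    using False assms by (simp add: mult_le_cancel_left_pos)
qed

lemma Cauchy_if_sq_le:
  fixes d :: "nat \<Rightarrow> nat \<Rightarrow> real" and a :: "nat \<Rightarrow> real"
  assumes "\<And>i j. 0 \<le> d i j" "\<And>i j. (d i j)\<^sup>2 \<le> a i + a j" "a \<longlonglongrightarrow> 0" "0 < e"
  shows "\<exists>N. \<forall>i\<ge>N. \<forall>j\<ge>N. d i j < e"
proof -
  obtain N where N: "\<And>n. n \<ge> N \<Longrightarrow> a n < e\<^sup>2 / 2"
    using order_tendstoD(2)[OF assms(3), of "e\<^sup>2 / 2"] assms(4)
    by (auto simp: eventually_sequentially)
  have "d i j < e" if "i \<ge> N" "j \<ge> N" for i j
  proof -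
    have "(d i j)\<^sup>2 < e\<^sup>2" using assms(2)[of i j] N[OF \<open>i \<ge> N\<close>] N[OF \<open>j \<ge> N\<close>] by simp
    then show ?thesis using assms(1,4) by (simp add: power_less_imp_less_base)
  qed
  then show ?thesis by blast
qed

lemma supergradient_antimono:
  fixes f g :: "real \<Rightarrow> real"
  assumes super: "\<And>y z. y \<in> S \<Longrightarrow> z \<in> S \<Longrightarrow> f z \<le> f y + (z - y) * g y"
    and "y \<in> S" "z \<in> S" "y \<le> z"
  shows "g z \<le> g y"
proof (cases "y = z")
  case False
  have "0 \<le> (z - y) * (g y - g z)"
    using super[of y z] super[of z y] assms(2,3) by (simp add: algebra_simps)
  with False \<open>y \<le> z\<close> show ?thesis by (simp add: zero_le_mult_iff)
qed simp

lemma has_real_derivative_supergradient: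
  fixes f g :: "real \<Rightarrow> real"
  assumes super: "\<And>y z. y \<in> S \<Longrightarrow> z \<in> S \<Longrightarrow> f z \<le> f y + (z - y) * g y"
    and "x \<in> S" and "(g \<longlongrightarrow> g x) (at x within S)"
  shows "(f has_real_derivative g x) (at x within S)"
proof -
  have quotient: "\<bar>(f y - f x) / (y - x) - g x\<bar> \<le> \<bar>g y - g x\<bar>" if "y \<in> S" "y \<noteq> x" for y
  proof -
    have lo: "(y - x) * g y \<le> f y - f x" and up: "f y - f x \<le> (y - x) * g x"
      using super[of y x] super[of x y] \<open>x \<in> S\<close> that by (simp_all add: algebra_simps)
    show ?thesis
    proof (cases "x < y")
      case True
      then have "g y \<le> (f y - f x) / (y - x)" "(f y - f x) / (y - x) \<le> g x"
        using lo up by (simp_all add: pos_le_divide_eq pos_divide_le_eq mult.commute)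
      then show ?thesis by linarith
    next
      case False
      with that have "y < x" by simp
      then have "(f y - f x) / (y - x) \<le> g y" "g x \<le> (f y - f x) / (y - x)"
        using lo up by (simp_all add: neg_divide_le_eq neg_le_divide_eq mult.commute)
      then show ?thesis by linarith
    qed
  qed
  have "((\<lambda>y. (f y - f x) / (y - x) - g x) \<longlongrightarrow> 0) (at x within S)"
  proof (rule Lim_null_comparison)
    show "\<forall>\<^sub>F y in at x within S. norm ((f y - f x) / (y - x) - g x) \<le> \<bar>g y - g x\<bar>"
      using quotient by (auto simp: eventually_at_filter)
    show "((\<lambda>y. \<bar>g y - g x\<bar>) \<longlongrightarrow> 0) (at x within S)"
      using assms(3) by (simp add: tendsto_rabs_zero LIM_zero)
  qed
  then show ?thesis by (simp add: has_field_derivative_iff LIM_zero_iff)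
qed

lemma tendsto_at_right_0_SUP_antimono:
  fixes g :: "real \<Rightarrow> real"
  assumes anti: "\<And>x y. 0 < x \<Longrightarrow> x \<le> y \<Longrightarrow> g y \<le> g x" and bound: "\<And>x. 0 < x \<Longrightarrow> g x \<le> B"
  shows "(g \<longlongrightarrow> (SUP x\<in>{0<..}. g x)) (at_right 0)"
proof -
  have bdd: "bdd_above (g ` {0<..})"
    using bound by (intro bdd_aboveI2) auto
  show ?thesis
  proof (rule order_tendstoI)
    fix a assume "a < (SUP x\<in>{0<..}. g x)"
    then obtain y where "0 < y" "a < g y"
      using less_cSUP_iff[OF _ bdd] by auto
    then have "a < g x" if "0 < x" "x < y" for x
      using anti[of x y] that by simp
    with \<open>0 < y\<close> show "\<forall>\<^sub>F x in at_right 0. a < g x"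
      unfolding eventually_at_right_field by blast
  next
    fix a assume "(SUP x\<in>{0<..}. g x) < a"
    then have "g x < a" if "0 < x" for x
      using cSUP_upper[OF _ bdd, of x] that by simp
    then show "\<forall>\<^sub>F x in at_right 0. g x < a"
      unfolding eventually_at_right_field by (auto intro!: exI[of _ 1])
  qed
qed

lemma right_derivative_remainder:
  fixes f :: "real \<Rightarrow> real"
  assumes "(f has_real_derivative D) (at 0 within {0..})"
  shows "((\<lambda>\<epsilon>. (f \<epsilon> - f 0 - \<epsilon> * D) / \<epsilon>) \<longlongrightarrow> 0) (at_right 0)"
proof -
  have "((\<lambda>\<epsilon>. (f \<epsilon> - f 0) / \<epsilon> - D) \<longlongrightarrow> 0) (at_right 0)"
    using assms by (simp add: has_field_derivative_iff at_within_Ici_at_right LIM_zero)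
  moreover have "\<forall>\<^sub>F \<epsilon> in at_right 0. (f \<epsilon> - f 0) / \<epsilon> - D = (f \<epsilon> - f 0 - \<epsilon> * D) / \<epsilon>"
    by (auto simp: eventually_at_filter diff_divide_distrib)
  ultimately show ?thesis by (rule Lim_transform_eventually)
qed

lemma eventually_at_pos: "0 < e \<Longrightarrow> \<forall>\<^sub>F x in at e. e / 2 < (x::real)"
  by (intro order_tendstoD(1)[OF tendsto_ident_at]) simp

section \<open>Integrals and \<open>L\<^sup>1\<close> limits\<close>

lemma Fatou_integrable_real:
  fixes u :: "nat \<Rightarrow> 'b \<Rightarrow> real" and w :: "'b \<Rightarrow> real"
  assumes u: "\<And>i. integrable M (u i)" "\<And>i x. 0 \<le> u i x"
    and w [measurable]: "w \<in> borel_measurable M"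
    and lim: "AE x in M. (\<lambda>i. u i x) \<longlonglongrightarrow> w x"
    and bound: "eventually (\<lambda>i. (\<integral>x. u i x \<partial>M) \<le> C) sequentially"
  shows "integrable M w \<and> (\<integral>x. w x \<partial>M) \<le> C"
proof -
  have [measurable]: "u i \<in> borel_measurable M" for i
    using u(1) by (rule borel_measurable_integrable)
  have w_nonneg: "AE x in M. 0 \<le> w x"
    using lim by eventually_elim (auto intro!: LIMSEQ_le_const u(2))
  obtain i where "(\<integral>x. u i x \<partial>M) \<le> C"
    using bound by (auto simp: eventually_sequentially)
  moreover have "0 \<le> (\<integral>x. u i x \<partial>M)"
    using u(2) by (intro integral_nonneg_AE) auto
  ultimately have "0 \<le> C" by simp
  have "(\<integral>\<^sup>+x. ennreal (w x) \<partial>M) = (\<integral>\<^sup>+x. liminf (\<lambda>i. ennreal (u i x)) \<partial>M)"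
    using lim
    by (intro nn_integral_cong_AE) (auto elim!: eventually_mono intro!: lim_imp_Liminf[symmetric])
  also have "\<dots> \<le> liminf (\<lambda>i. \<integral>\<^sup>+x. ennreal (u i x) \<partial>M)"
    by (rule nn_integral_liminf) measurable
  also have "\<dots> = liminf (\<lambda>i. ennreal (\<integral>x. u i x \<partial>M))"
    using nn_integral_eq_integral[OF u(1)] u(2) by simp
  also have "\<dots> \<le> limsup (\<lambda>i. ennreal (\<integral>x. u i x \<partial>M))"
    by (rule Liminf_le_Limsup) simp
  also have "\<dots> \<le> ennreal C"
    using bound by (intro Limsup_bounded) (auto elim!: eventually_mono intro: ennreal_leI)
  finally have le: "(\<integral>\<^sup>+x. ennreal (w x) \<partial>M) \<le> ennreal C" .
  then have "integrable M w"
    using w_nonneg by (intro integrableI_nonneg) (auto simp: le_less_trans)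
  moreover have "(\<integral>x. w x \<partial>M) \<le> C"
    using le nn_integral_eq_integral[OF \<open>integrable M w\<close> w_nonneg] \<open>0 \<le> C\<close>
    by (simp add: ennreal_le_iff)
  ultimately show ?thesis ..
qed

lemma integrable_mult_bounded:
  fixes \<rho> f :: "'b \<Rightarrow> real"
  assumes "integrable M \<rho>" "f \<in> borel_measurable M" "\<And>x. \<bar>f x\<bar> \<le> B"
  shows "integrable M (\<lambda>x. \<rho> x * f x)"
proof (rule Bochner_Integration.integrable_bound[where f = "\<lambda>x. B * \<rho> x"])
  show "integrable M (\<lambda>x. B * \<rho> x)" using assms(1) by simp
  show "(\<lambda>x. \<rho> x * f x) \<in> borel_measurable M"
    using assms(1,2) by (simp add: borel_measurable_integrable)
  show "AE x in M. norm (\<rho> x * f x) \<le> norm (B * \<rho> x)"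
  proof (rule AE_I2)
    fix x
    have "\<bar>f x\<bar> \<le> \<bar>B\<bar>" using assms(3)[of x] by linarith
    then have "\<bar>\<rho> x\<bar> * \<bar>f x\<bar> \<le> \<bar>\<rho> x\<bar> * \<bar>B\<bar>" by (rule mult_left_mono) simp
    then show "norm (\<rho> x * f x) \<le> norm (B * \<rho> x)"
      by (simp add: abs_mult mult.commute)
  qed
qed

lemma integral_mult_diff_le:
  fixes \<rho> \<sigma> f :: "'b \<Rightarrow> real"
  assumes "integrable M \<rho>" "integrable M \<sigma>" "f \<in> borel_measurable M" "\<And>x. \<bar>f x\<bar> \<le> B"
  shows "\<bar>(\<integral>x. \<rho> x * f x \<partial>M) - (\<integral>x. \<sigma> x * f x \<partial>M)\<bar> \<le> B * (\<integral>x. \<bar>\<rho> x - \<sigma> x\<bar> \<partial>M)"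
proof -
  have "integrable M (\<lambda>x. (\<rho> x - \<sigma> x) * f x)"
    using assms by (intro integrable_mult_bounded) auto
  then have "\<bar>(\<integral>x. \<rho> x * f x \<partial>M) - (\<integral>x. \<sigma> x * f x \<partial>M)\<bar> = \<bar>\<integral>x. (\<rho> x - \<sigma> x) * f x \<partial>M\<bar>"
    using assms integrable_mult_bounded[of M _ f B]
    by (simp add: left_diff_distrib)
  also have "\<dots> \<le> (\<integral>x. \<bar>(\<rho> x - \<sigma> x) * f x\<bar> \<partial>M)"
    by (rule integral_abs_bound)
  also have "\<dots> \<le> (\<integral>x. B * \<bar>\<rho> x - \<sigma> x\<bar> \<partial>M)"
  proof (rule integral_mono)
    show "integrable M (\<lambda>x. \<bar>(\<rho> x - \<sigma> x) * f x\<bar>)"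
      using \<open>integrable M (\<lambda>x. (\<rho> x - \<sigma> x) * f x)\<close> by (rule integrable_abs)
    show "integrable M (\<lambda>x. B * \<bar>\<rho> x - \<sigma> x\<bar>)" using assms(1,2) by simp
    fix x
    have "\<bar>\<rho> x - \<sigma> x\<bar> * \<bar>f x\<bar> \<le> \<bar>\<rho> x - \<sigma> x\<bar> * B"
      using assms(4) by (rule mult_left_mono) simp
    then show "\<bar>(\<rho> x - \<sigma> x) * f x\<bar> \<le> B * \<bar>\<rho> x - \<sigma> x\<bar>"
      by (simp add: abs_mult mult.commute)
  qed
  finally show ?thesis by simp
qed

lemma integral_mult_tendsto_L1:
  fixes r :: "'i \<Rightarrow> 'b \<Rightarrow> real" and \<rho> f :: "'b \<Rightarrow> real"
  assumes "\<forall>\<^sub>F i in F. integrable M (r i)" "integrable M \<rho>"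
    and "f \<in> borel_measurable M" "\<And>x. \<bar>f x\<bar> \<le> B"
    and "((\<lambda>i. \<integral>x. \<bar>r i x - \<rho> x\<bar> \<partial>M) \<longlongrightarrow> 0) F"
  shows "((\<lambda>i. \<integral>x. r i x * f x \<partial>M) \<longlongrightarrow> (\<integral>x. \<rho> x * f x \<partial>M)) F"
proof -
  have "((\<lambda>i. (\<integral>x. r i x * f x \<partial>M) - (\<integral>x. \<rho> x * f x \<partial>M)) \<longlongrightarrow> 0) F"
  proof (rule Lim_null_comparison)
    show "\<forall>\<^sub>F i in F. norm ((\<integral>x. r i x * f x \<partial>M) - (\<integral>x. \<rho> x * f x \<partial>M))
                      \<le> B * (\<integral>x. \<bar>r i x - \<rho> x\<bar> \<partial>M)"
      using assms(1)
    proof eventually_elim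
      case (elim i)
      show ?case using integral_mult_diff_le[OF elim assms(2-4)] by simp
    qed
    show "((\<lambda>i. B * (\<integral>x. \<bar>r i x - \<rho> x\<bar> \<partial>M)) \<longlongrightarrow> 0) F"
      using tendsto_mult_right_zero[OF assms(5)] by simp
  qed
  then show ?thesis by (simp add: LIM_zero_iff)
qed

lemma L1_dist_to_AE_limit_le:
  fixes r :: "nat \<Rightarrow> 'b \<Rightarrow> real"
  assumes r: "\<And>n. integrable M (r n)" and s: "strict_mono s"
    and lim: "AE x in M. (\<lambda>i. r (s i) x) \<longlonglongrightarrow> \<rho> x" and [measurable]: "\<rho> \<in> borel_measurable M"
    and N: "\<forall>i\<ge>N. \<forall>j\<ge>N. (\<integral>x. \<bar>r i x - r j x\<bar> \<partial>M) < e" and "N \<le> n"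
  shows "integrable M (\<lambda>x. \<bar>r n x - \<rho> x\<bar>) \<and> (\<integral>x. \<bar>r n x - \<rho> x\<bar> \<partial>M) \<le> e"
proof (rule Fatou_integrable_real[where u = "\<lambda>i x. \<bar>r n x - r (s i) x\<bar>"])
  show "AE x in M. (\<lambda>i. \<bar>r n x - r (s i) x\<bar>) \<longlonglongrightarrow> \<bar>r n x - \<rho> x\<bar>"
    using lim by eventually_elim (auto intro!: tendsto_intros)
  have "N \<le> s i" if "N \<le> i" for i
    using seq_suble[OF s, of i] that by simp
  then show "\<forall>\<^sub>F i in sequentially. (\<integral>x. \<bar>r n x - r (s i) x\<bar> \<partial>M) \<le> e"
    using N \<open>N \<le> n\<close> by (auto simp: eventually_sequentially intro!: less_imp_le)
qed (use r in auto)

lemma L1_Cauchy_limit: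
  fixes r :: "nat \<Rightarrow> 'b \<Rightarrow> real"
  assumes r: "\<And>n. integrable M (r n)" "\<And>n x. 0 \<le> r n x"
    and Cauchy: "\<And>e. 0 < e \<Longrightarrow> \<exists>N. \<forall>i\<ge>N. \<forall>j\<ge>N. (\<integral>x. \<bar>r i x - r j x\<bar> \<partial>M) < e"
  obtains \<rho> s where "strict_mono s" "AE x in M. (\<lambda>i. r (s i) x) \<longlonglongrightarrow> \<rho> x" "\<And>x. 0 \<le> \<rho> x"
    "integrable M \<rho>" "(\<lambda>n. \<integral>x. \<bar>r n x - \<rho> x\<bar> \<partial>M) \<longlonglongrightarrow> 0"
proof -
  have [measurable]: "r n \<in> borel_measurable M" for n
    using r(1) by (rule borel_measurable_integrable)
  have "\<exists>N. \<forall>i\<ge>N. \<forall>j\<ge>N. (LINT x|M. norm (r i x - r j x)) < e" if "0 < e" for e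
    using Cauchy[OF that] by simp
  then obtain s where s: "strict_mono s" and Cauchy_AE: "AE x in M. Cauchy (\<lambda>i. r (s i) x)"
    using cauchy_L1_AE_cauchy_subseq[of M r, OF r(1)] by blast
  define \<rho> where "\<rho> x = max 0 (lim (\<lambda>i. r (s i) x))" for x
  have \<rho>_measurable [measurable]: "\<rho> \<in> borel_measurable M"
    unfolding \<rho>_def by measurable
  have lim: "AE x in M. (\<lambda>i. r (s i) x) \<longlonglongrightarrow> \<rho> x"
    using Cauchy_AE
  proof eventually_elim
    case (elim x)
    then have "(\<lambda>i. r (s i) x) \<longlonglongrightarrow> lim (\<lambda>i. r (s i) x)"
      by (simp add: Cauchy_convergent_iff convergent_LIMSEQ_iff)
    moreover from this have "0 \<le> lim (\<lambda>i. r (s i) x)"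
      by (rule LIMSEQ_le_const) (auto intro: r(2))
    ultimately show ?case by (simp add: \<rho>_def)
  qed
  have \<rho>_nonneg: "0 \<le> \<rho> x" for x
    by (simp add: \<rho>_def)
  note dist_le = L1_dist_to_AE_limit_le[OF r(1) s lim \<rho>_measurable]
  obtain N where "\<forall>i\<ge>N. \<forall>j\<ge>N. (\<integral>x. \<bar>r i x - r j x\<bar> \<partial>M) < 1"
    using Cauchy[of 1] by auto
  then have "integrable M (\<lambda>x. r N x - \<rho> x)"
    using dist_le by (simp add: integrable_abs_iff)
  from Bochner_Integration.integrable_diff[OF r(1)[of N] this]
  have "integrable M \<rho>" by simp
  moreover have "(\<lambda>n. \<integral>x. \<bar>r n x - \<rho> x\<bar> \<partial>M) \<longlonglongrightarrow> 0"
  proof (rule LIMSEQ_I)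
    fix e :: real assume "0 < e"
    then obtain N where N: "\<forall>i\<ge>N. \<forall>j\<ge>N. (\<integral>x. \<bar>r i x - r j x\<bar> \<partial>M) < e / 2"
      using Cauchy[of "e / 2"] by auto
    have "norm ((\<integral>x. \<bar>r n x - \<rho> x\<bar> \<partial>M) - 0) < e" if "N \<le> n" for n
      using dist_le[OF N that] integral_nonneg_AE[of "\<lambda>x. \<bar>r n x - \<rho> x\<bar>" M] \<open>0 < e\<close> by simp
    then show "\<exists>N. \<forall>n\<ge>N. norm ((\<integral>x. \<bar>r n x - \<rho> x\<bar> \<partial>M) - 0) < e" by blast
  qed
  ultimately show ?thesis
    using that s lim \<rho>_nonneg by blast
qed

lemma emeasure_distr_density_eq_integral:
  fixes \<rho> :: "'b \<Rightarrow> real"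
  assumes "integrable M \<rho>" "\<And>x. 0 \<le> \<rho> x" "\<pi> \<in> measurable M N" "A \<in> sets N"
  shows "emeasure (distr (density M (\<lambda>x. ennreal (\<rho> x))) N \<pi>) A
    = ennreal (\<integral>x. \<rho> x * indicator (\<pi> -` A \<inter> space M) x \<partial>M)"
proof -
  have [measurable]: "\<rho> \<in> borel_measurable M"
    using assms(1) by (rule borel_measurable_integrable)
  have A: "\<pi> -` A \<inter> space M \<in> sets M"
    using assms(3,4) by measurable
  have "emeasure (distr (density M \<rho>) N \<pi>) A
      = (\<integral>\<^sup>+x. ennreal (\<rho> x) * indicator (\<pi> -` A \<inter> space M) x \<partial>M)"
    using assms(3,4) A by (simp add: emeasure_distr emeasure_density)
  also have "\<dots> = (\<integral>\<^sup>+x. ennreal (\<rho> x * indicator (\<pi> -` A \<inter> space M) x) \<partial>M)"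
    by (intro nn_integral_cong) (simp add: indicator_def)
  also have "\<dots> = ennreal (\<integral>x. \<rho> x * indicator (\<pi> -` A \<inter> space M) x \<partial>M)"
    using assms(1,2) A by (intro nn_integral_eq_integral integrable_real_mult_indicator) auto
  finally show ?thesis .
qed

lemma distr_density_eq_iff:
  fixes \<rho> :: "'b \<Rightarrow> real"
  assumes "integrable M \<rho>" "\<And>x. 0 \<le> \<rho> x" "\<pi> \<in> measurable M N" "finite_measure N"
  shows "distr (density M (\<lambda>x. ennreal (\<rho> x))) N \<pi> = N \<longleftrightarrow>
         (\<forall>A\<in>sets N. (\<integral>x. \<rho> x * indicator (\<pi> -` A \<inter> space M) x \<partial>M) = measure N A)"
proof
  assume eq: "distr (density M \<rho>) N \<pi> = N"
  show "\<forall>A\<in>sets N. (\<integral>x. \<rho> x * indicator (\<pi> -` A \<inter> space M) x \<partial>M) = measure N A"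
  proof
    fix A assume A: "A \<in> sets N"
    from emeasure_distr_density_eq_integral[OF assms(1-3) A]
    have "ennreal (\<integral>x. \<rho> x * indicator (\<pi> -` A \<inter> space M) x \<partial>M) = ennreal (measure N A)"
      unfolding eq finite_measure.emeasure_eq_measure[OF assms(4)] ..
    moreover have "0 \<le> (\<integral>x. \<rho> x * indicator (\<pi> -` A \<inter> space M) x \<partial>M)"
      using assms(2) by (intro integral_nonneg_AE) (simp add: AE_I2)
    ultimately show "(\<integral>x. \<rho> x * indicator (\<pi> -` A \<inter> space M) x \<partial>M) = measure N A"
      by simp
  qed
next
  assume marginal: "\<forall>A\<in>sets N. (\<integral>x. \<rho> x * indicator (\<pi> -` A \<inter> space M) x \<partial>M) = measure N A"
  show "distr (density M \<rho>) N \<pi> = N"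
  proof (rule measure_eqI)
    fix A assume "A \<in> sets (distr (density M \<rho>) N \<pi>)"
    then have A: "A \<in> sets N" by simp
    show "emeasure (distr (density M \<rho>) N \<pi>) A = emeasure N A"
      unfolding emeasure_distr_density_eq_integral[OF assms(1-3) A]
        finite_measure.emeasure_eq_measure[OF assms(4)]
      using marginal A by simp
  qed simp
qed

section \<open>Couplings as densities\<close>

locale entropic_ot =
  fixes Mm Mp :: "'a::{metric_space, second_countable_topology} measure"
    and c :: "'a \<times> 'a \<Rightarrow> real"
  assumes prob_Mm: "prob_space Mm" and sets_Mm: "sets Mm = sets borel"
    and prob_Mp: "prob_space Mp" and sets_Mp: "sets Mp = sets borel"
    and compact_supp_Mm: "compact (mu_support Mm)" and compact_supp_Mp: "compact (mu_support Mp)"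
    and continuous_c: "continuous_on (mu_support Mm \<times> mu_support Mp) c"
begin

abbreviation PM :: "('a \<times> 'a) measure" where
  "PM \<equiv> Mm \<Otimes>\<^sub>M Mp"

sublocale Mm: prob_space Mm by (rule prob_Mm)
sublocale Mp: prob_space Mp by (rule prob_Mp)
sublocale P: prob_space PM by (intro prob_space_pair prob_Mm prob_Mp)

lemma sets_PM: "sets PM = sets borel"
proof -
  have "sets PM = sets (borel \<Otimes>\<^sub>M borel)"
    by (rule sets_pair_measure_cong[OF sets_Mm sets_Mp])
  then show ?thesis by (metis borel_prod)
qed

lemma space_PM [simp]: "space PM = UNIV"
  using sets_eq_imp_space_eq[OF sets_PM] by simp

lemma space_Mm [simp]: "space Mm = UNIV"
  using sets_eq_imp_space_eq[OF sets_Mm] by simp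

lemma UNIV_in_sets_PM [simp]: "UNIV \<in> sets PM"
  using sets.top[of PM] by simp

lemma measure_PM_UNIV [simp]: "measure PM UNIV = 1"
  using P.prob_space by simp

lemma borel_measurable_PM: "borel_measurable PM = borel_measurable borel"
  by (rule measurable_cong_sets[OF sets_PM refl])

lemma vimage_fst_in_sets_PM: "A \<in> sets borel \<Longrightarrow> fst -` A \<in> sets PM"
  using measurable_sets[OF measurable_fst[of Mm Mp], of A] by (simp add: sets_Mm)

lemma vimage_snd_in_sets_PM: "A \<in> sets borel \<Longrightarrow> snd -` A \<in> sets PM"
  using measurable_sets[OF measurable_snd[of Mm Mp], of A] by (simp add: sets_Mp)

definition cost :: "'a \<times> 'a \<Rightarrow> real" where
  "cost z = indicator (mu_support Mm \<times> mu_support Mp) z * c z"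

lemma cost_measurable [measurable]: "cost \<in> borel_measurable PM"
proof -
  have "closed (mu_support Mm \<times> mu_support Mp)"
    using compact_supp_Mm compact_supp_Mp by (intro compact_imp_closed compact_Times)
  then have "(\<lambda>z. indicator (mu_support Mm \<times> mu_support Mp) z *\<^sub>R c z) \<in> borel_measurable borel"
    using continuous_c
    by (intro borel_measurable_continuous_on_indicator) (simp_all add: borel_closed)
  then show ?thesis by (simp add: cost_def[abs_def] borel_measurable_PM)
qed

lemma cost_bounded: "\<exists>B. \<forall>z. \<bar>cost z\<bar> \<le> B"
proof -
  have "bounded (c ` (mu_support Mm \<times> mu_support Mp))"
    using compact_supp_Mm compact_supp_Mp continuous_c
    by (intro compact_imp_bounded compact_continuous_image compact_Times)
  then obtain B where "0 < B" "\<And>z. z \<in> mu_support Mm \<times> mu_support Mp \<Longrightarrow> \<bar>c z\<bar> \<le> B"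
    by (auto simp: bounded_pos)
  then have "\<bar>cost z\<bar> \<le> B" for z
    by (cases "z \<in> mu_support Mm \<times> mu_support Mp") (simp_all add: cost_def)
  then show ?thesis by blast
qed

lemma ot_cost_eq_integral: "sets \<gamma> = sets PM \<Longrightarrow> ot_cost Mm Mp c \<gamma> = (\<integral>z. cost z \<partial>\<gamma>)"
  by (simp add: ot_cost_def set_lebesgue_integral_def cost_def)

lemma ot_cost_bounded: "\<exists>B. \<forall>\<gamma>\<in>couplings Mm Mp. \<bar>ot_cost Mm Mp c \<gamma>\<bar> \<le> B"
proof -
  obtain B where B: "\<And>z. \<bar>cost z\<bar> \<le> B" using cost_bounded by blast
  have "\<bar>ot_cost Mm Mp c \<gamma>\<bar> \<le> B" if "\<gamma> \<in> couplings Mm Mp" for \<gamma>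
  proof -
    have \<gamma>: "prob_space \<gamma>" "sets \<gamma> = sets PM"
      using that by (simp_all add: couplings_def)
    have [measurable]: "cost \<in> borel_measurable \<gamma>"
      by (subst measurable_cong_sets[OF \<gamma>(2) refl]) (rule cost_measurable)
    have "integrable \<gamma> cost"
      using B prob_space.finite_measure[OF \<gamma>(1)]
      by (intro finite_measure.integrable_const_bound[where B = B]) auto
    then have "(\<integral>z. \<bar>cost z\<bar> \<partial>\<gamma>) \<le> B"
      using B by (intro prob_space.integral_le_const[OF \<gamma>(1)]) auto
    then have "\<bar>\<integral>z. cost z \<partial>\<gamma>\<bar> \<le> B"
      using integral_abs_bound[where M = \<gamma> and f = cost] by linarith
    then show ?thesis
      using \<gamma>(2) by (simp add: ot_cost_eq_integral)
  qed
  then show ?thesis by blast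
qed

definition dens :: "('a \<times> 'a \<Rightarrow> real) \<Rightarrow> ('a \<times> 'a) measure" where
  "dens \<rho> = density PM (\<lambda>z. ennreal (\<rho> z))"

definition has_marginals :: "('a \<times> 'a \<Rightarrow> real) \<Rightarrow> bool" where
  "has_marginals \<rho> \<longleftrightarrow> (\<forall>A\<in>sets borel.
      (\<integral>z. \<rho> z * indicator (fst -` A) z \<partial>PM) = measure Mm A \<and>
      (\<integral>z. \<rho> z * indicator (snd -` A) z \<partial>PM) = measure Mp A)"

definition admissible :: "('a \<times> 'a \<Rightarrow> real) \<Rightarrow> bool" where
  "admissible \<rho> \<longleftrightarrow> (\<forall>z. 0 \<le> \<rho> z) \<and> integrable PM \<rho> \<and> has_marginals \<rho> \<and>
                     integrable PM (\<lambda>z. \<rho> z * ln (\<rho> z))"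

lemma
  assumes "admissible \<rho>"
  shows admissible_nonneg: "0 \<le> \<rho> z"
    and admissible_integrable: "integrable PM \<rho>"
    and admissible_measurable: "\<rho> \<in> borel_measurable PM"
    and admissible_marginals: "has_marginals \<rho>"
    and admissible_integrable_xlnx: "integrable PM (\<lambda>z. \<rho> z * ln (\<rho> z))"
  using assms unfolding admissible_def by blast+

definition Ent :: "('a \<times> 'a \<Rightarrow> real) \<Rightarrow> real" where
  "Ent \<rho> = (\<integral>z. \<rho> z * ln (\<rho> z) \<partial>PM)"

definition Cost :: "('a \<times> 'a \<Rightarrow> real) \<Rightarrow> real" where
  "Cost \<rho> = (\<integral>z. \<rho> z * cost z \<partial>PM)"

definition dist1 :: "('a \<times> 'a \<Rightarrow> real) \<Rightarrow> ('a \<times> 'a \<Rightarrow> real) \<Rightarrow> real" where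
  "dist1 \<rho> \<sigma> = (\<integral>z. \<bar>\<rho> z - \<sigma> z\<bar> \<partial>PM)"

definition obj :: "real \<Rightarrow> ('a \<times> 'a \<Rightarrow> real) \<Rightarrow> real" where
  "obj \<epsilon> \<rho> = Cost \<rho> + \<epsilon> * Ent \<rho>"

lemma dist1_nonneg: "0 \<le> dist1 \<rho> \<sigma>"
  unfolding dist1_def by (rule integral_nonneg_AE) simp

lemma dist1_commute: "dist1 \<rho> \<sigma> = dist1 \<sigma> \<rho>"
  unfolding dist1_def by (simp add: abs_minus_commute)

lemma has_marginals_integral:
  assumes "has_marginals \<rho>"
  shows "(\<integral>z. \<rho> z \<partial>PM) = 1"
proof -
  have "(\<integral>z. \<rho> z * indicator (fst -` UNIV) z \<partial>PM) = measure Mm UNIV"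
  proof -
    have "UNIV \<in> sets (borel :: 'a measure)" by simp
    with assms show ?thesis unfolding has_marginals_def by blast
  qed
  then show ?thesis using Mm.prob_space by simp
qed

lemma dens_in_couplings_iff:
  assumes "integrable PM \<rho>" "\<And>z. 0 \<le> \<rho> z"
  shows "dens \<rho> \<in> couplings Mm Mp \<longleftrightarrow> has_marginals \<rho>"
proof -
  have "distr (dens \<rho>) Mm fst = Mm \<longleftrightarrow>
      (\<forall>A\<in>sets borel. (\<integral>z. \<rho> z * indicator (fst -` A) z \<partial>PM) = measure Mm A)"
    using distr_density_eq_iff[OF assms measurable_fst Mm.finite_measure_axioms]
    by (simp add: dens_def sets_Mm)
  moreover have "distr (dens \<rho>) Mp snd = Mp \<longleftrightarrow>
      (\<forall>A\<in>sets borel. (\<integral>z. \<rho> z * indicator (snd -` A) z \<partial>PM) = measure Mp A)"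
    using distr_density_eq_iff[OF assms measurable_snd Mp.finite_measure_axioms]
    by (simp add: dens_def sets_Mp)
  moreover have "prob_space (dens \<rho>)" if "has_marginals \<rho>"
  proof (rule prob_spaceI)
    have "emeasure (dens \<rho>) UNIV = (\<integral>\<^sup>+z. ennreal (\<rho> z) \<partial>PM)"
      using assms(1) by (simp add: dens_def emeasure_density)
    also have "\<dots> = ennreal (\<integral>z. \<rho> z \<partial>PM)"
      using assms by (intro nn_integral_eq_integral) auto
    finally show "emeasure (dens \<rho>) (space (dens \<rho>)) = 1"
      using has_marginals_integral[OF that] by (simp add: dens_def)
  qed
  ultimately show ?thesis
    by (auto simp: couplings_def has_marginals_def dens_def)
qed

lemma admissible_dens_in_couplings: "admissible \<rho> \<Longrightarrow> dens \<rho> \<in> couplings Mm Mp"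
  using dens_in_couplings_iff admissible_integrable admissible_nonneg admissible_marginals by blast

lemma rel_ent_dens: "admissible \<rho> \<Longrightarrow> rel_ent (dens \<rho>) PM = ereal (Ent \<rho>)"
proof -
  assume \<rho>: "admissible \<rho>"
  note [measurable] = admissible_measurable[OF \<rho>]
  have "AE z in PM. ennreal (\<rho> z) = RN_deriv PM (dens \<rho>) z"
    by (intro P.RN_deriv_unique) (auto simp: dens_def)
  let ?R = "\<lambda>z. enn2real (RN_deriv PM (dens \<rho>) z)"
  have "AE z in PM. ?R z = \<rho> z"
    using \<open>AE z in PM. ennreal (\<rho> z) = RN_deriv PM (dens \<rho>) z\<close>
    by eventually_elim (metis enn2real_ennreal admissible_nonneg[OF \<rho>])
  then have xlnx_ae: "AE z in PM. ?R z * ln (?R z) = \<rho> z * ln (\<rho> z)"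
    by eventually_elim simp
  have "absolutely_continuous PM (dens \<rho>)"
    unfolding dens_def by (intro absolutely_continuousI_density) auto
  moreover have "integrable PM (\<lambda>z. ?R z * ln (?R z))"
    using admissible_integrable_xlnx[OF \<rho>] by (subst integrable_cong_AE[OF _ _ xlnx_ae]) auto
  moreover have "(\<integral>z. ?R z * ln (?R z) \<partial>PM) = Ent \<rho>"
    unfolding Ent_def by (rule integral_cong_AE) (use xlnx_ae in auto)
  ultimately show ?thesis
    by (simp add: rel_ent_def dens_def)
qed

lemma couplings_finite_rel_ent_dens:
  assumes \<gamma>: "\<gamma> \<in> couplings Mm Mp" and finite: "rel_ent \<gamma> PM \<noteq> \<infinity>"
  obtains \<rho> where "admissible \<rho>" "\<gamma> = dens \<rho>"
proof -
  define \<rho> where "\<rho> z = enn2real (RN_deriv PM \<gamma> z)" for z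
  have ac: "sets \<gamma> = sets PM" "absolutely_continuous PM \<gamma>"
    and xlnx: "integrable PM (\<lambda>z. \<rho> z * ln (\<rho> z))"
    using finite by (auto simp: rel_ent_def \<rho>_def split: if_splits)
  have prob: "prob_space \<gamma>"
    using \<gamma> by (simp add: couplings_def)
  have "AE z in PM. RN_deriv PM \<gamma> z \<noteq> \<infinity>"
    using P.RN_deriv_finite[OF prob_space_imp_sigma_finite[OF prob] ac(2,1)] .
  then have "AE z in PM. RN_deriv PM \<gamma> z = ennreal (\<rho> z)"
    by eventually_elim (auto simp: \<rho>_def less_top)
  moreover have [measurable]: "\<rho> \<in> borel_measurable PM"
    unfolding \<rho>_def[abs_def] by measurable
  ultimately have "density PM (RN_deriv PM \<gamma>) = dens \<rho>"
    unfolding dens_def by (intro density_cong) auto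
  then have "\<gamma> = dens \<rho>"
    using P.density_RN_deriv[OF ac(2,1)] by simp
  have "(\<integral>\<^sup>+z. ennreal (\<rho> z) \<partial>PM) = emeasure \<gamma> UNIV"
    using \<open>\<gamma> = dens \<rho>\<close> by (simp add: dens_def emeasure_density)
  also have "\<dots> = 1"
    using prob_space.emeasure_space_1[OF prob] ac(1) sets_eq_imp_space_eq[OF ac(1)] by simp
  finally have "integrable PM \<rho>"
    by (intro integrableI_nonneg) (auto simp: \<rho>_def)
  moreover have "\<And>z. 0 \<le> \<rho> z" by (simp add: \<rho>_def)
  ultimately have "admissible \<rho>"
    using \<gamma> \<open>\<gamma> = dens \<rho>\<close> dens_in_couplings_iff[of \<rho>] xlnx unfolding admissible_def by blast
  then show ?thesis
    using that \<open>\<gamma> = dens \<rho>\<close> by blast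
qed

lemma ot_cost_dens:
  assumes "admissible \<rho>"
  shows "ot_cost Mm Mp c (dens \<rho>) = Cost \<rho>"
proof -
  have [measurable]: "\<rho> \<in> borel_measurable PM" and "\<And>z. 0 \<le> \<rho> z"
    using assms by (simp_all add: admissible_measurable admissible_nonneg)
  then show ?thesis
    unfolding ot_cost_eq_integral[OF sets_density] dens_def Cost_def
    by (subst integral_density) auto
qed

lemma ent_obj_dens: "admissible \<rho> \<Longrightarrow> ent_obj Mm Mp c \<epsilon> (dens \<rho>) = ereal (obj \<epsilon> \<rho>)"
  by (simp add: ent_obj_def obj_def ot_cost_dens rel_ent_dens)

lemma Ent_nonneg: "admissible \<rho> \<Longrightarrow> 0 \<le> Ent \<rho>"
proof -
  assume \<rho>: "admissible \<rho>"
  have "(\<integral>z. \<rho> z - 1 \<partial>PM) \<le> Ent \<rho>"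
    unfolding Ent_def using \<rho>
    by (intro integral_mono) (auto simp: admissible_def xlnx_ge_minus_one)
  moreover have "(\<integral>z. \<rho> z - 1 \<partial>PM) = 0"
    using \<rho> has_marginals_integral P.prob_space by (simp add: admissible_def)
  ultimately show ?thesis by simp
qed

lemma dens_eq_if_dist1_eq_0:
  assumes "admissible \<rho>" "admissible \<sigma>" "dist1 \<rho> \<sigma> = 0"
  shows "dens \<rho> = dens \<sigma>"
proof -
  have "integrable PM (\<lambda>z. \<bar>\<rho> z - \<sigma> z\<bar>)"
    using assms by (simp add: admissible_integrable)
  then have "AE z in PM. \<bar>\<rho> z - \<sigma> z\<bar> = 0"
    using assms(3) integral_nonneg_eq_0_iff_AE[of PM "\<lambda>z. \<bar>\<rho> z - \<sigma> z\<bar>"]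
    by (simp add: dist1_def)
  then have "AE z in PM. ennreal (\<rho> z) = ennreal (\<sigma> z)"
    by eventually_elim simp
  moreover note [measurable] = admissible_measurable[OF assms(1)] admissible_measurable[OF assms(2)]
  ultimately show ?thesis
    unfolding dens_def by (intro density_cong) auto
qed

lemma Cost_bounded: "\<exists>B. \<forall>\<rho>. admissible \<rho> \<longrightarrow> \<bar>Cost \<rho>\<bar> \<le> B"
  using ot_cost_bounded admissible_dens_in_couplings ot_cost_dens by metis

lemma Cost_tendsto:
  assumes "\<forall>\<^sub>F i in F. admissible (r i)" "admissible \<rho>" "((\<lambda>i. dist1 (r i) \<rho>) \<longlongrightarrow> 0) F"
  shows "((\<lambda>i. Cost (r i)) \<longlongrightarrow> Cost \<rho>) F"
proof -
  obtain B where "\<And>z. \<bar>cost z\<bar> \<le> B" using cost_bounded by blast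
  then show ?thesis
    unfolding Cost_def using assms
    by (intro integral_mult_tendsto_L1)
      (auto elim: eventually_mono simp: admissible_integrable dist1_def)
qed

lemma product_in_couplings: "PM \<in> couplings Mm Mp"
proof -
  have "distr PM Mp snd = Mp"
  proof (rule measure_eqI)
    fix A assume "A \<in> sets (distr PM Mp snd)"
    then have A: "A \<in> sets Mp" by simp
    have "emeasure (distr PM Mp snd) A = emeasure PM (snd -` A \<inter> space PM)"
      by (rule emeasure_distr) (use A in auto)
    also have "\<dots> = emeasure PM (UNIV \<times> A)"
      by (rule arg_cong[where f = "emeasure PM"]) auto
    also have "\<dots> = emeasure Mp A"
      using A Mp.emeasure_pair_measure_Times[of UNIV Mm A] Mm.emeasure_space_1
      by (simp add: sets_Mm)
    finally show "emeasure (distr PM Mp snd) A = emeasure Mp A" .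
  qed simp
  then show ?thesis
    using Mp.distr_pair_fst P.prob_space_axioms by (simp add: couplings_def)
qed

lemma admissible_one: "admissible (\<lambda>_. 1)"
proof -
  have "dens (\<lambda>_. 1) = PM"
    by (simp add: dens_def density_1)
  then have "has_marginals (\<lambda>_. 1)"
    using dens_in_couplings_iff[of "\<lambda>_. 1"] product_in_couplings by simp
  then show ?thesis by (simp add: admissible_def)
qed

section \<open>Uniform convexity of the entropy\<close>

definition mid :: "('a \<times> 'a \<Rightarrow> real) \<Rightarrow> ('a \<times> 'a \<Rightarrow> real) \<Rightarrow> 'a \<times> 'a \<Rightarrow> real" where
  "mid \<rho> \<sigma> z = (\<rho> z + \<sigma> z) / 2"

lemma integral_mid_mult:
  assumes "integrable PM (\<lambda>z. \<rho> z * f z)" "integrable PM (\<lambda>z. \<sigma> z * f z)"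
  shows "(\<integral>z. mid \<rho> \<sigma> z * f z \<partial>PM) = ((\<integral>z. \<rho> z * f z \<partial>PM) + (\<integral>z. \<sigma> z * f z \<partial>PM)) / 2"
proof -
  have "(\<lambda>z. mid \<rho> \<sigma> z * f z) = (\<lambda>z. (\<rho> z * f z + \<sigma> z * f z) / 2)"
    by (auto simp: mid_def field_simps)
  then show ?thesis using assms by simp
qed

lemma mid_nonneg: "admissible \<rho> \<Longrightarrow> admissible \<sigma> \<Longrightarrow> 0 \<le> mid \<rho> \<sigma> z"
  using admissible_nonneg[of \<rho> z] admissible_nonneg[of \<sigma> z] by (simp add: mid_def)

lemma has_marginals_mid:
  assumes \<rho>: "admissible \<rho>" and \<sigma>: "admissible \<sigma>"
  shows "has_marginals (mid \<rho> \<sigma>)"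
  unfolding has_marginals_def
proof (intro ballI conjI)
  have average: "(\<integral>z. mid \<rho> \<sigma> z * indicator S z \<partial>PM)
      = ((\<integral>z. \<rho> z * indicator S z \<partial>PM) + (\<integral>z. \<sigma> z * indicator S z \<partial>PM)) / 2"
    if "S \<in> sets PM" for S
    using \<rho> \<sigma> that
    by (intro integral_mid_mult integrable_real_mult_indicator)
      (simp_all add: admissible_integrable)
  fix A :: "'a set" assume A: "A \<in> sets borel"
  have "(\<integral>z. \<rho> z * indicator (fst -` A) z \<partial>PM) = measure Mm A"
    "(\<integral>z. \<sigma> z * indicator (fst -` A) z \<partial>PM) = measure Mm A"
    "(\<integral>z. \<rho> z * indicator (snd -` A) z \<partial>PM) = measure Mp A"
    "(\<integral>z. \<sigma> z * indicator (snd -` A) z \<partial>PM) = measure Mp A"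
    using admissible_marginals[OF \<rho>] admissible_marginals[OF \<sigma>] A
    unfolding has_marginals_def by blast+
  then show "(\<integral>z. mid \<rho> \<sigma> z * indicator (fst -` A) z \<partial>PM) = measure Mm A"
    "(\<integral>z. mid \<rho> \<sigma> z * indicator (snd -` A) z \<partial>PM) = measure Mp A"
    using average[OF vimage_fst_in_sets_PM[OF A]] average[OF vimage_snd_in_sets_PM[OF A]]
    by simp_all
qed

lemma integrable_xlnx_mid:
  assumes \<rho>: "admissible \<rho>" and \<sigma>: "admissible \<sigma>"
  shows "integrable PM (\<lambda>z. mid \<rho> \<sigma> z * ln (mid \<rho> \<sigma> z))"
proof (rule Bochner_Integration.integrable_bound)
  note [measurable] = admissible_measurable[OF \<rho>] admissible_measurable[OF \<sigma>]
  show "integrable PM (\<lambda>z. 1 + \<bar>\<rho> z * ln (\<rho> z)\<bar> + \<bar>\<sigma> z * ln (\<sigma> z)\<bar>)"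
    using \<rho> \<sigma> by (simp add: admissible_integrable_xlnx)
  show "(\<lambda>z. mid \<rho> \<sigma> z * ln (mid \<rho> \<sigma> z)) \<in> borel_measurable PM"
    unfolding mid_def[abs_def] by measurable
  show "AE z in PM. norm (mid \<rho> \<sigma> z * ln (mid \<rho> \<sigma> z))
                      \<le> norm (1 + \<bar>\<rho> z * ln (\<rho> z)\<bar> + \<bar>\<sigma> z * ln (\<sigma> z)\<bar>)"
  proof (rule AE_I2)
    fix z
    have "mid \<rho> \<sigma> z * ln (mid \<rho> \<sigma> z) \<le> (\<rho> z * ln (\<rho> z) + \<sigma> z * ln (\<sigma> z)) / 2"
      using xlnx_gap_nonneg[OF admissible_nonneg[OF \<rho>] admissible_nonneg[OF \<sigma>]]
      by (simp add: xlnx_gap_def mid_def)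
    moreover have "- 1 \<le> mid \<rho> \<sigma> z * ln (mid \<rho> \<sigma> z)"
      using xlnx_ge_minus_one[OF mid_nonneg[OF \<rho> \<sigma>, of z]] mid_nonneg[OF \<rho> \<sigma>, of z] by linarith
    ultimately show "norm (mid \<rho> \<sigma> z * ln (mid \<rho> \<sigma> z))
                      \<le> norm (1 + \<bar>\<rho> z * ln (\<rho> z)\<bar> + \<bar>\<sigma> z * ln (\<sigma> z)\<bar>)"
      by (simp add: abs_le_iff) linarith
  qed
qed

lemma admissible_mid:
  assumes "admissible \<rho>" "admissible \<sigma>"
  shows "admissible (mid \<rho> \<sigma>)"
proof -
  have "integrable PM (mid \<rho> \<sigma>)"
    unfolding mid_def[abs_def] using assms by (simp add: admissible_integrable)
  then show ?thesis
    unfolding admissible_def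
      using mid_nonneg[OF assms] has_marginals_mid[OF assms] integrable_xlnx_mid[OF assms]
    by blast
qed

lemma Cost_mid:
  assumes "admissible \<rho>" "admissible \<sigma>"
  shows "Cost (mid \<rho> \<sigma>) = (Cost \<rho> + Cost \<sigma>) / 2"
proof -
  obtain B where B: "\<And>z. \<bar>cost z\<bar> \<le> B" using cost_bounded by blast
  have "integrable PM (\<lambda>z. \<rho> z * cost z)" "integrable PM (\<lambda>z. \<sigma> z * cost z)"
    using integrable_mult_bounded[OF admissible_integrable cost_measurable B] assms by blast+
  then show ?thesis
    unfolding Cost_def by (rule integral_mid_mult)
qed

lemma xlnx_gap_integral:
  assumes \<rho>: "admissible \<rho>" and \<sigma>: "admissible \<sigma>"
  shows "integrable PM (\<lambda>z. xlnx_gap (\<rho> z) (\<sigma> z))"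
    and "(\<integral>z. xlnx_gap (\<rho> z) (\<sigma> z) \<partial>PM) = (Ent \<rho> + Ent \<sigma>) / 2 - Ent (mid \<rho> \<sigma>)"
proof -
  have gap: "(\<lambda>z. xlnx_gap (\<rho> z) (\<sigma> z))
      = (\<lambda>z. (\<rho> z * ln (\<rho> z) + \<sigma> z * ln (\<sigma> z)) / 2 - mid \<rho> \<sigma> z * ln (mid \<rho> \<sigma> z))"
    by (simp add: xlnx_gap_def mid_def)
  have "integrable PM (\<lambda>z. \<rho> z * ln (\<rho> z))" "integrable PM (\<lambda>z. \<sigma> z * ln (\<sigma> z))"
    "integrable PM (\<lambda>z. mid \<rho> \<sigma> z * ln (mid \<rho> \<sigma> z))"
    using \<rho> \<sigma> integrable_xlnx_mid[OF \<rho> \<sigma>] by (simp_all add: admissible_integrable_xlnx)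
  then show "integrable PM (\<lambda>z. xlnx_gap (\<rho> z) (\<sigma> z))"
    and "(\<integral>z. xlnx_gap (\<rho> z) (\<sigma> z) \<partial>PM) = (Ent \<rho> + Ent \<sigma>) / 2 - Ent (mid \<rho> \<sigma>)"
    unfolding gap by (simp_all add: Ent_def)
qed

lemma dist1_le_xlnx_gap_integral:
  assumes \<rho>: "admissible \<rho>" and \<sigma>: "admissible \<sigma>" and "0 < l"
  shows "dist1 \<rho> \<sigma> \<le> 2 * ((Ent \<rho> + Ent \<sigma>) / 2 - Ent (mid \<rho> \<sigma>)) / l + l"
proof -
  have integrable: "integrable PM \<rho>" "integrable PM \<sigma>"
    using \<rho> \<sigma> by (simp_all add: admissible_integrable)
  have "dist1 \<rho> \<sigma> \<le> (\<integral>z. 2 * xlnx_gap (\<rho> z) (\<sigma> z) / l + l * (\<rho> z + \<sigma> z) / 2 \<partial>PM)"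
    unfolding dist1_def using integrable xlnx_gap_integral(1)[OF \<rho> \<sigma>] \<open>0 < l\<close>
    by (intro integral_mono abs_diff_le_xlnx_gap admissible_nonneg[OF \<rho>] admissible_nonneg[OF \<sigma>])
      auto
  also have "\<dots> = 2 * ((Ent \<rho> + Ent \<sigma>) / 2 - Ent (mid \<rho> \<sigma>)) / l + l"
    using integrable xlnx_gap_integral[OF \<rho> \<sigma>]
      has_marginals_integral[OF admissible_marginals[OF \<rho>]]
      has_marginals_integral[OF admissible_marginals[OF \<sigma>]]
    by (simp add: algebra_simps)
  finally show ?thesis .
qed

text \<open>Optimise \<open>dist1_le_xlnx_gap_integral\<close> at \<open>l = dist1 \<rho> \<sigma> / 2\<close>.\<close>
lemma Ent_mid:
  assumes \<rho>: "admissible \<rho>" and \<sigma>: "admissible \<sigma>"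
  shows "Ent (mid \<rho> \<sigma>) \<le> (Ent \<rho> + Ent \<sigma>) / 2 - (dist1 \<rho> \<sigma>)\<^sup>2 / 8"
proof -
  define I where "I = (Ent \<rho> + Ent \<sigma>) / 2 - Ent (mid \<rho> \<sigma>)"
  have "(dist1 \<rho> \<sigma>)\<^sup>2 \<le> 8 * I"
  proof (cases "dist1 \<rho> \<sigma> = 0")
    case True
    have "0 \<le> I"
      unfolding I_def xlnx_gap_integral(2)[OF \<rho> \<sigma>, symmetric]
      using \<rho> \<sigma>
      by (intro integral_nonneg_AE AE_I2 xlnx_gap_nonneg) (simp_all add: admissible_nonneg)
    with True show ?thesis by simp
  next
    case False
    then have d: "0 < dist1 \<rho> \<sigma>" using dist1_nonneg[of \<rho> \<sigma>] by simp
    then have "dist1 \<rho> \<sigma> \<le> 4 * I / dist1 \<rho> \<sigma> + dist1 \<rho> \<sigma> / 2"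
      using dist1_le_xlnx_gap_integral[OF \<rho> \<sigma>, of "dist1 \<rho> \<sigma> / 2"] by (simp add: I_def)
    with d show ?thesis by (simp add: field_simps power2_eq_square)
  qed
  then show ?thesis unfolding I_def by argo
qed

lemma obj_mid:
  assumes "admissible \<rho>" "admissible \<sigma>" "0 \<le> \<epsilon>"
  shows "obj \<epsilon> (mid \<rho> \<sigma>) \<le> (obj \<epsilon> \<rho> + obj \<epsilon> \<sigma>) / 2 - \<epsilon> * (dist1 \<rho> \<sigma>)\<^sup>2 / 8"
  using mult_left_mono[OF Ent_mid[OF assms(1,2)] assms(3)] Cost_mid[OF assms(1,2)]
  by (simp add: obj_def field_simps)

lemma dist1_sq_le_obj_excess:
  assumes "admissible \<rho>" "admissible \<sigma>" "0 \<le> \<epsilon>" "\<And>\<tau>. admissible \<tau> \<Longrightarrow> m \<le> obj \<epsilon> \<tau>"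
  shows "\<epsilon> * (dist1 \<rho> \<sigma>)\<^sup>2 \<le> 4 * (obj \<epsilon> \<rho> - m) + 4 * (obj \<epsilon> \<sigma> - m)"
proof -
  have "\<epsilon> * (dist1 \<rho> \<sigma>)\<^sup>2 / 8 \<le> (obj \<epsilon> \<rho> + obj \<epsilon> \<sigma>) / 2 - m"
    using assms(4)[OF admissible_mid[OF assms(1,2)]] obj_mid[OF assms(1-3)] by linarith
  then show ?thesis by argo
qed

section \<open>Existence of entropic minimisers\<close>

lemma Fatou_Ent:
  assumes r: "\<And>i. admissible (r i)" and \<rho>: "\<And>z. 0 \<le> \<rho> z" "\<rho> \<in> borel_measurable PM"
    and lim: "AE z in PM. (\<lambda>i. r i z) \<longlonglongrightarrow> \<rho> z"
    and bound: "\<forall>\<^sub>F i in sequentially. Ent (r i) \<le> C"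
  shows "integrable PM (\<lambda>z. \<rho> z * ln (\<rho> z)) \<and> Ent \<rho> \<le> C"
proof -
  note [measurable] = \<rho>(2)
  have "integrable PM (\<lambda>z. \<rho> z * ln (\<rho> z) + 1) \<and> (\<integral>z. \<rho> z * ln (\<rho> z) + 1 \<partial>PM) \<le> C + 1"
  proof (rule Fatou_integrable_real[where u = "\<lambda>i z. r i z * ln (r i z) + 1"])
    show "integrable PM (\<lambda>z. r i z * ln (r i z) + 1)" for i
      using r by (simp add: admissible_integrable_xlnx)
    show "0 \<le> r i z * ln (r i z) + 1" for i z
      using xlnx_ge_minus_one[OF admissible_nonneg[OF r, of i z]] admissible_nonneg[OF r, of i z]
      by linarith
    show "AE z in PM. (\<lambda>i. r i z * ln (r i z) + 1) \<longlonglongrightarrow> \<rho> z * ln (\<rho> z) + 1"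
      using lim
    proof eventually_elim
      case (elim z)
      have "(\<lambda>i. r i z * ln (r i z)) \<longlonglongrightarrow> \<rho> z * ln (\<rho> z)"
        using continuous_on_tendsto_compose[OF continuous_on_xlnx elim] \<rho>(1) admissible_nonneg[OF r]
        by simp
      then show ?case by (intro tendsto_add tendsto_const)
    qed
    show "\<forall>\<^sub>F i in sequentially. (\<integral>z. r i z * ln (r i z) + 1 \<partial>PM) \<le> C + 1"
      using bound by eventually_elim (simp add: Ent_def admissible_integrable_xlnx[OF r])
  qed simp
  then have integrable: "integrable PM (\<lambda>z. \<rho> z * ln (\<rho> z) + 1)"
    and le: "(\<integral>z. \<rho> z * ln (\<rho> z) + 1 \<partial>PM) \<le> C + 1"
    by simp_all
  have "integrable PM (\<lambda>z. (\<rho> z * ln (\<rho> z) + 1) - 1)"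
    using integrable by (intro Bochner_Integration.integrable_diff) simp_all
  then have "integrable PM (\<lambda>z. \<rho> z * ln (\<rho> z))"
    by simp
  moreover from this have "(\<integral>z. \<rho> z * ln (\<rho> z) + 1 \<partial>PM) = Ent \<rho> + 1"
    by (simp add: Ent_def)
  ultimately show ?thesis
    using le by simp
qed

lemma has_marginals_L1_limit:
  assumes "\<And>n. admissible (r n)" "integrable PM \<rho>" "(\<lambda>n. dist1 (r n) \<rho>) \<longlonglongrightarrow> 0"
  shows "has_marginals \<rho>"
  unfolding has_marginals_def
proof (intro ballI conjI)
  have lim: "(\<lambda>n. \<integral>z. r n z * indicator S z \<partial>PM) \<longlonglongrightarrow> (\<integral>z. \<rho> z * indicator S z \<partial>PM)"
    if "S \<in> sets PM" for S
    using assms that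
    by (intro integral_mult_tendsto_L1[where B = 1]) (auto simp: admissible_integrable dist1_def)
  fix A :: "'a set" assume A: "A \<in> sets borel"
  have "(\<integral>z. r n z * indicator (fst -` A) z \<partial>PM) = measure Mm A"
    "(\<integral>z. r n z * indicator (snd -` A) z \<partial>PM) = measure Mp A" for n
    using admissible_marginals[OF assms(1)] A unfolding has_marginals_def by blast+
  then show "(\<integral>z. \<rho> z * indicator (fst -` A) z \<partial>PM) = measure Mm A"
    "(\<integral>z. \<rho> z * indicator (snd -` A) z \<partial>PM) = measure Mp A"
    using lim[OF vimage_fst_in_sets_PM[OF A]] lim[OF vimage_snd_in_sets_PM[OF A]]
    by (simp_all add: LIMSEQ_const_iff)
qed

lemma admissible_L1_limit:
  assumes r: "\<And>n. admissible (r n)"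
    and Cauchy: "\<And>e. 0 < e \<Longrightarrow> \<exists>N. \<forall>i\<ge>N. \<forall>j\<ge>N. dist1 (r i) (r j) < e"
    and bound: "\<And>n. Ent (r n) \<le> B"
  obtains \<rho> where "admissible \<rho>" "(\<lambda>n. dist1 (r n) \<rho>) \<longlonglongrightarrow> 0"
proof -
  obtain \<rho> s where s: "strict_mono s" and lim: "AE z in PM. (\<lambda>i. r (s i) z) \<longlonglongrightarrow> \<rho> z"
    and nonneg: "\<And>z. 0 \<le> \<rho> z" and integrable: "integrable PM \<rho>"
    and dist: "(\<lambda>n. \<integral>z. \<bar>r n z - \<rho> z\<bar> \<partial>PM) \<longlonglongrightarrow> 0"
    by (rule L1_Cauchy_limit[of PM r])
      (use r Cauchy in \<open>auto simp: admissible_integrable admissible_nonneg dist1_def\<close>)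
  then have "has_marginals \<rho>"
    using r by (intro has_marginals_L1_limit) (simp_all add: dist1_def)
  moreover have "integrable PM (\<lambda>z. \<rho> z * ln (\<rho> z))"
    using Fatou_Ent[of "\<lambda>i. r (s i)" \<rho> B] r nonneg lim bound integrable
    by (simp add: borel_measurable_integrable)
  ultimately have "admissible \<rho>"
    using nonneg integrable unfolding admissible_def by blast
  then show ?thesis
    using that dist by (simp add: dist1_def)
qed

lemma Ent_lower_semicontinuous:
  assumes r: "\<And>n. admissible (r n)" and \<rho>: "admissible \<rho>"
    and dist: "(\<lambda>n. dist1 (r n) \<rho>) \<longlonglongrightarrow> 0"
    and bound: "\<And>n. Ent (r n) \<le> L n" and L: "L \<longlonglongrightarrow> L0"
  shows "Ent \<rho> \<le> L0"
proof -
  have "\<exists>s. strict_mono s \<and> (AE z in PM. (\<lambda>n. r (s n) z - \<rho> z) \<longlonglongrightarrow> 0)"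
    using r \<rho> dist by (intro tendsto_L1_AE_subseq) (simp_all add: admissible_integrable dist1_def)
  then obtain s where s: "strict_mono s" and diff: "AE z in PM. (\<lambda>n. r (s n) z - \<rho> z) \<longlonglongrightarrow> 0"
    by blast
  from diff have lim: "AE z in PM. (\<lambda>n. r (s n) z) \<longlonglongrightarrow> \<rho> z"
    by eventually_elim (simp add: LIM_zero_iff)
  have L_s: "(\<lambda>n. L (s n)) \<longlonglongrightarrow> L0"
    using LIMSEQ_subseq_LIMSEQ[OF L s] by (simp add: comp_def)
  show ?thesis
  proof (rule field_le_epsilon)
    fix \<delta> :: real assume "0 < \<delta>"
    then have "\<forall>\<^sub>F n in sequentially. Ent (r (s n)) \<le> L0 + \<delta>"
      using order_tendstoD(2)[OF L_s, of "L0 + \<delta>"] bound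
      by (auto elim!: eventually_mono intro: order_trans less_imp_le)
    then show "Ent \<rho> \<le> L0 + \<delta>"
      using Fatou_Ent[of "\<lambda>n. r (s n)" \<rho>] r lim admissible_nonneg[OF \<rho>] admissible_measurable[OF \<rho>]
      by blast
  qed
qed

lemma minimizing_sequence_limit:
  assumes "0 < \<epsilon>" and r: "\<And>n. admissible (r n)"
    and lower: "\<And>\<sigma>. admissible \<sigma> \<Longrightarrow> m \<le> obj \<epsilon> \<sigma>"
    and lim: "(\<lambda>n. obj \<epsilon> (r n)) \<longlonglongrightarrow> m"
  obtains \<rho> where "admissible \<rho>" "obj \<epsilon> \<rho> \<le> m"
proof -
  have "(\<lambda>n. 4 * (obj \<epsilon> (r n) - m) / \<epsilon>) \<longlonglongrightarrow> 4 * (m - m) / \<epsilon>"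
    by (intro tendsto_intros lim) (use \<open>0 < \<epsilon>\<close> in simp)
  then have Cauchy: "\<exists>N. \<forall>i\<ge>N. \<forall>j\<ge>N. dist1 (r i) (r j) < e" if "0 < e" for e
  proof (intro Cauchy_if_sq_le[OF dist1_nonneg] that)
    show "(dist1 (r i) (r j))\<^sup>2 \<le> 4 * (obj \<epsilon> (r i) - m) / \<epsilon> + 4 * (obj \<epsilon> (r j) - m) / \<epsilon>" for i j
    proof -
      have "\<epsilon> * (dist1 (r i) (r j))\<^sup>2 \<le> 4 * (obj \<epsilon> (r i) - m) + 4 * (obj \<epsilon> (r j) - m)"
        using dist1_sq_le_obj_excess[OF r[of i] r[of j] _ lower] \<open>0 < \<epsilon>\<close> by simp
      with \<open>0 < \<epsilon>\<close> show ?thesis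
        by (simp add: pos_le_divide_eq add_divide_distrib[symmetric] mult.commute)
    qed
  qed simp
  obtain B where B: "\<And>\<sigma>. admissible \<sigma> \<Longrightarrow> \<bar>Cost \<sigma>\<bar> \<le> B"
    using Cost_bounded by blast
  obtain K where K: "\<And>n. obj \<epsilon> (r n) \<le> K"
    using BseqD[OF convergent_imp_Bseq[OF convergentI[OF lim]]] by (auto simp: abs_le_iff)
  have Ent_eq: "Ent (r n) = (obj \<epsilon> (r n) - Cost (r n)) / \<epsilon>" for n
    using \<open>0 < \<epsilon>\<close> by (simp add: obj_def)
  have "Ent (r n) \<le> (K + B) / \<epsilon>" for n
    unfolding Ent_eq using K[of n] B[OF r, of n] \<open>0 < \<epsilon>\<close> by (simp add: divide_right_mono)
  then obtain \<rho> where \<rho>: "admissible \<rho>" "(\<lambda>n. dist1 (r n) \<rho>) \<longlonglongrightarrow> 0"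
    using admissible_L1_limit[OF r Cauchy] by blast
  have "(\<lambda>n. (obj \<epsilon> (r n) - Cost (r n)) / \<epsilon>) \<longlonglongrightarrow> (m - Cost \<rho>) / \<epsilon>"
    using r \<rho> \<open>0 < \<epsilon>\<close> by (intro tendsto_intros lim Cost_tendsto) auto
  then have "Ent \<rho> \<le> (m - Cost \<rho>) / \<epsilon>"
    by (rule Ent_lower_semicontinuous[OF r \<rho>, rotated]) (simp add: Ent_eq)
  then show ?thesis
    using that \<rho>(1) \<open>0 < \<epsilon>\<close> by (simp add: obj_def field_simps)
qed

lemma exists_obj_minimizer:
  assumes "0 < \<epsilon>"
  obtains \<rho> where "admissible \<rho>" "\<And>\<sigma>. admissible \<sigma> \<Longrightarrow> obj \<epsilon> \<rho> \<le> obj \<epsilon> \<sigma>"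
proof -
  obtain B where B: "\<And>\<sigma>. admissible \<sigma> \<Longrightarrow> \<bar>Cost \<sigma>\<bar> \<le> B"
    using Cost_bounded by blast
  define m where "m = (INF \<sigma>\<in>Collect admissible. obj \<epsilon> \<sigma>)"
  have "- B \<le> obj \<epsilon> \<sigma>" if "admissible \<sigma>" for \<sigma>
    using B[OF that] mult_nonneg_nonneg[OF _ Ent_nonneg[OF that], of \<epsilon>] \<open>0 < \<epsilon>\<close>
    by (simp add: obj_def abs_le_iff)
  then have bdd: "bdd_below (obj \<epsilon> ` Collect admissible)"
    by (intro bdd_belowI2) auto
  have lower: "m \<le> obj \<epsilon> \<sigma>" if "admissible \<sigma>" for \<sigma>
    unfolding m_def using bdd that by (intro cINF_lower) auto
  have "\<exists>\<rho>. admissible \<rho> \<and> obj \<epsilon> \<rho> < m + 1 / Suc n" for n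
    using cINF_less_iff[OF _ bdd, of "m + 1 / Suc n"] admissible_one by (auto simp: m_def)
  then obtain r where r: "\<And>n. admissible (r n)" "\<And>n. obj \<epsilon> (r n) < m + 1 / Suc n"
    by metis
  have lim: "(\<lambda>n. obj \<epsilon> (r n)) \<longlonglongrightarrow> m"
  proof (rule tendsto_sandwich[where f = "\<lambda>_. m" and h = "\<lambda>n. m + 1 / Suc n"])
    show "(\<lambda>n. m + 1 / real (Suc n)) \<longlonglongrightarrow> m"
      using tendsto_add[OF tendsto_const LIMSEQ_Suc[OF lim_inverse_n']]
      by (simp add: inverse_eq_divide)
  qed (use lower r in \<open>auto intro!: always_eventually less_imp_le\<close>)
  obtain \<rho> where "admissible \<rho>" "obj \<epsilon> \<rho> \<le> m"
    using minimizing_sequence_limit[where r = r, OF \<open>0 < \<epsilon>\<close> r(1) lower lim] by blast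
  then show ?thesis
    using that lower by force
qed

section \<open>Differentiability of the value\<close>

lemma ot_val_le:
  assumes "\<gamma> \<in> couplings Mm Mp" "0 \<le> \<epsilon>" "ent_obj Mm Mp c \<epsilon> \<gamma> \<le> ereal x"
  shows "ot_val Mm Mp c \<epsilon> \<le> x"
proof -
  obtain B where B: "\<And>\<gamma>. \<gamma> \<in> couplings Mm Mp \<Longrightarrow> \<bar>ot_cost Mm Mp c \<gamma>\<bar> \<le> B"
    using ot_cost_bounded by blast
  have "ereal (- B) \<le> ent_obj Mm Mp c \<epsilon> \<gamma>'" if \<gamma>': "\<gamma>' \<in> couplings Mm Mp" for \<gamma>'
  proof (cases "rel_ent \<gamma>' PM = \<infinity>")
    case True
    then show ?thesis
      using B[OF \<gamma>'] \<open>0 \<le> \<epsilon>\<close> by (cases "\<epsilon> = 0") (simp_all add: ent_obj_def)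
  next
    case False
    then obtain \<sigma> where \<sigma>: "admissible \<sigma>" "\<gamma>' = dens \<sigma>"
      using couplings_finite_rel_ent_dens[OF \<gamma>'] by blast
    then have "- B \<le> obj \<epsilon> \<sigma>"
      using B[OF \<gamma>'] mult_nonneg_nonneg[OF \<open>0 \<le> \<epsilon>\<close> Ent_nonneg[OF \<sigma>(1)]]
      by (simp add: ot_cost_dens obj_def abs_le_iff)
    then show ?thesis
      using \<sigma> by (simp add: ent_obj_dens)
  qed
  then have "ereal (- B) \<le> (INF \<gamma>\<in>couplings Mm Mp. ent_obj Mm Mp c \<epsilon> \<gamma>)"
    by (rule INF_greatest)
  moreover have "(INF \<gamma>\<in>couplings Mm Mp. ent_obj Mm Mp c \<epsilon> \<gamma>) \<le> ereal x"
    using INF_lower[OF assms(1)] assms(3) by (rule order_trans)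
  ultimately show ?thesis
    unfolding ot_val_def by (cases "INF \<gamma>\<in>couplings Mm Mp. ent_obj Mm Mp c \<epsilon> \<gamma>") auto
qed

lemma ot_val_le_obj: "0 \<le> \<epsilon> \<Longrightarrow> admissible \<sigma> \<Longrightarrow> ot_val Mm Mp c \<epsilon> \<le> obj \<epsilon> \<sigma>"
  using ot_val_le[OF admissible_dens_in_couplings] by (simp add: ent_obj_dens)

lemma ot_val_0_le_ot_cost:
  assumes "\<gamma> \<in> couplings Mm Mp"
  shows "ot_val Mm Mp c 0 \<le> ot_cost Mm Mp c \<gamma>"
proof (rule ot_val_le[OF assms])
  show "ent_obj Mm Mp c 0 \<gamma> \<le> ereal (ot_cost Mm Mp c \<gamma>)"
    by (simp add: ent_obj_def zero_ereal_def[symmetric])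
qed simp

lemma INF_ent_obj_eq_obj_minimum:
  assumes "0 < \<epsilon>" "admissible \<rho>" "\<And>\<sigma>. admissible \<sigma> \<Longrightarrow> obj \<epsilon> \<rho> \<le> obj \<epsilon> \<sigma>"
  shows "(INF \<gamma>\<in>couplings Mm Mp. ent_obj Mm Mp c \<epsilon> \<gamma>) = ereal (obj \<epsilon> \<rho>)"
proof (rule INF_eqI)
  show "ereal (obj \<epsilon> \<rho>) \<le> ent_obj Mm Mp c \<epsilon> \<gamma>" if \<gamma>: "\<gamma> \<in> couplings Mm Mp" for \<gamma>
  proof (cases "rel_ent \<gamma> PM = \<infinity>")
    case True
    with \<open>0 < \<epsilon>\<close> show ?thesis by (simp add: ent_obj_def)
  next
    case False
    then obtain \<sigma> where "admissible \<sigma>" "\<gamma> = dens \<sigma>"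
      using couplings_finite_rel_ent_dens[OF \<gamma>] by blast
    with assms(3) show ?thesis by (simp add: ent_obj_dens)
  qed
next
  fix y assume "\<And>\<gamma>. \<gamma> \<in> couplings Mm Mp \<Longrightarrow> y \<le> ent_obj Mm Mp c \<epsilon> \<gamma>"
  from this[OF admissible_dens_in_couplings[OF assms(2)]] show "y \<le> ereal (obj \<epsilon> \<rho>)"
    by (simp add: ent_obj_dens[OF assms(2)])
qed

definition optimal_density :: "real \<Rightarrow> ('a \<times> 'a \<Rightarrow> real) \<Rightarrow> bool" where
  "optimal_density \<epsilon> \<rho> \<longleftrightarrow> admissible \<rho> \<and> ot_val Mm Mp c \<epsilon> = obj \<epsilon> \<rho>"

lemma optimal_density_iff_minimizer:
  assumes "0 < \<epsilon>"
  shows "optimal_density \<epsilon> \<rho> \<longleftrightarrow> admissible \<rho> \<and> (\<forall>\<sigma>. admissible \<sigma> \<longrightarrow> obj \<epsilon> \<rho> \<le> obj \<epsilon> \<sigma>)"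
proof
  assume "optimal_density \<epsilon> \<rho>"
  then show "admissible \<rho> \<and> (\<forall>\<sigma>. admissible \<sigma> \<longrightarrow> obj \<epsilon> \<rho> \<le> obj \<epsilon> \<sigma>)"
    using ot_val_le_obj[of \<epsilon>] assms by (simp add: optimal_density_def)
next
  assume "admissible \<rho> \<and> (\<forall>\<sigma>. admissible \<sigma> \<longrightarrow> obj \<epsilon> \<rho> \<le> obj \<epsilon> \<sigma>)"
  then show "optimal_density \<epsilon> \<rho>"
    using INF_ent_obj_eq_obj_minimum[OF assms, of \<rho>] by (simp add: optimal_density_def ot_val_def)
qed

lemma exists_optimal_density:
  assumes "0 < \<epsilon>"
  shows "\<exists>\<rho>. optimal_density \<epsilon> \<rho>"
proof -
  obtain \<rho> where "admissible \<rho>" "\<And>\<sigma>. admissible \<sigma> \<Longrightarrow> obj \<epsilon> \<rho> \<le> obj \<epsilon> \<sigma>"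
    using exists_obj_minimizer[OF assms] by blast
  then show ?thesis
    using optimal_density_iff_minimizer[OF assms] by blast
qed

lemma optimal_density_supergradient:
  assumes "optimal_density y \<rho>" "0 \<le> z"
  shows "ot_val Mm Mp c z \<le> ot_val Mm Mp c y + (z - y) * Ent \<rho>"
  using ot_val_le_obj[OF assms(2)] assms(1) by (simp add: optimal_density_def obj_def algebra_simps)

text \<open>By uniform convexity the distance is controlled by the excess \<open>obj e \<sigma> - ot_val e\<close>,
  which the supergradient inequality of \<open>\<rho>\<close> at \<open>x\<close> bounds by \<open>(e - x) (Ent \<sigma> - Ent \<rho>)\<close>.\<close>
lemma optimal_density_dist1:
  assumes \<rho>: "optimal_density e \<rho>" and \<sigma>: "optimal_density x \<sigma>" and "0 < e" "0 \<le> x"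
  shows "e * (dist1 \<rho> \<sigma>)\<^sup>2 \<le> 4 * (e - x) * (Ent \<sigma> - Ent \<rho>)"
proof -
  have adm: "admissible \<rho>" "admissible \<sigma>"
    using \<rho> \<sigma> by (simp_all add: optimal_density_def)
  have "e * (dist1 \<rho> \<sigma>)\<^sup>2 \<le> 4 * (obj e \<rho> - ot_val Mm Mp c e) + 4 * (obj e \<sigma> - ot_val Mm Mp c e)"
    using adm \<open>0 < e\<close> by (intro dist1_sq_le_obj_excess ot_val_le_obj) simp_all
  moreover have "ot_val Mm Mp c x \<le> ot_val Mm Mp c e + (x - e) * Ent \<rho>"
    using optimal_density_supergradient[OF \<rho> \<open>0 \<le> x\<close>] .
  ultimately show ?thesis
    using \<rho> \<sigma> by (simp add: optimal_density_def obj_def algebra_simps)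
qed

lemma dist1_sq_le_Ent_diff:
  assumes "optimal_density e \<rho>" "optimal_density x \<sigma>" "0 \<le> x" "x < e"
  shows "(dist1 \<rho> \<sigma>)\<^sup>2 \<le> 4 * (Ent \<sigma> - Ent \<rho>)"
proof -
  have "0 < e" using assms(3,4) by simp
  have bound: "e * (dist1 \<rho> \<sigma>)\<^sup>2 \<le> 4 * (e - x) * (Ent \<sigma> - Ent \<rho>)"
    using assms by (intro optimal_density_dist1) simp_all
  moreover have "0 \<le> e * (dist1 \<rho> \<sigma>)\<^sup>2"
    using \<open>0 < e\<close> by simp
  ultimately have "0 \<le> (4 * (e - x)) * (Ent \<sigma> - Ent \<rho>)"
    by simp
  then have "0 \<le> Ent \<sigma> - Ent \<rho>"
    using assms(4) by (simp add: zero_le_mult_iff)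
  have "e * (dist1 \<rho> \<sigma>)\<^sup>2 \<le> (4 * (e - x)) * (Ent \<sigma> - Ent \<rho>)"
    using bound by simp
  also have "\<dots> \<le> (4 * e) * (Ent \<sigma> - Ent \<rho>)"
    using assms(3) \<open>0 \<le> Ent \<sigma> - Ent \<rho>\<close> by (intro mult_right_mono) simp_all
  also have "\<dots> = e * (4 * (Ent \<sigma> - Ent \<rho>))"
    by simp
  finally show ?thesis
    using \<open>0 < e\<close> by simp
qed

lemma ent_plan_eq_dens:
  assumes "0 < \<epsilon>" "optimal_density \<epsilon> \<rho>"
  shows "ent_plan Mm Mp c \<epsilon> = dens \<rho>"
  unfolding ent_plan_def
proof (rule the_equality)
  have \<rho>: "admissible \<rho>" "\<And>\<sigma>. admissible \<sigma> \<Longrightarrow> obj \<epsilon> \<rho> \<le> obj \<epsilon> \<sigma>"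
    using assms optimal_density_iff_minimizer by blast+
  note INF_eq = INF_ent_obj_eq_obj_minimum[OF \<open>0 < \<epsilon>\<close> \<rho>]
  show "dens \<rho> \<in> couplings Mm Mp \<and>
      ent_obj Mm Mp c \<epsilon> (dens \<rho>) = (INF \<gamma>\<in>couplings Mm Mp. ent_obj Mm Mp c \<epsilon> \<gamma>)"
    using admissible_dens_in_couplings[OF \<rho>(1)] by (simp add: INF_eq ent_obj_dens[OF \<rho>(1)])
  fix \<gamma> assume \<gamma>: "\<gamma> \<in> couplings Mm Mp \<and>
      ent_obj Mm Mp c \<epsilon> \<gamma> = (INF \<gamma>\<in>couplings Mm Mp. ent_obj Mm Mp c \<epsilon> \<gamma>)"
  then have "ent_obj Mm Mp c \<epsilon> \<gamma> = ereal (obj \<epsilon> \<rho>)"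
    by (simp add: INF_eq)
  then have "rel_ent \<gamma> PM \<noteq> \<infinity>"
    using \<open>0 < \<epsilon>\<close> by (auto simp: ent_obj_def)
  then obtain \<sigma> where \<sigma>: "admissible \<sigma>" "\<gamma> = dens \<sigma>"
    using couplings_finite_rel_ent_dens \<gamma> by blast
  with \<gamma> assms(2) have "optimal_density \<epsilon> \<sigma>"
    by (simp add: INF_eq ent_obj_dens optimal_density_def)
  then have "\<epsilon> * (dist1 \<rho> \<sigma>)\<^sup>2 \<le> 0"
    using optimal_density_dist1[OF assms(2) _ \<open>0 < \<epsilon>\<close>, of \<epsilon> \<sigma>] \<open>0 < \<epsilon>\<close> by simp
  then have "dist1 \<rho> \<sigma> = 0"
    using \<open>0 < \<epsilon>\<close> by (simp add: mult_le_0_iff)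
  then show "\<gamma> = dens \<rho>"
    using dens_eq_if_dist1_eq_0[OF \<rho>(1) \<sigma>(1)] \<sigma>(2) by simp
qed

text \<open>\<open>opt_dens \<epsilon>\<close> is unspecified for \<open>\<epsilon> \<le> 0\<close>.\<close>
definition opt_dens :: "real \<Rightarrow> 'a \<times> 'a \<Rightarrow> real" where
  "opt_dens \<epsilon> = (SOME \<rho>. optimal_density \<epsilon> \<rho>)"

definition opt_ent :: "real \<Rightarrow> real" where
  "opt_ent \<epsilon> = Ent (opt_dens \<epsilon>)"

lemma optimal_density_opt_dens: "0 < \<epsilon> \<Longrightarrow> optimal_density \<epsilon> (opt_dens \<epsilon>)"
  unfolding opt_dens_def by (rule someI_ex[OF exists_optimal_density])

lemma admissible_opt_dens: "0 < \<epsilon> \<Longrightarrow> admissible (opt_dens \<epsilon>)"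
  using optimal_density_opt_dens by (simp add: optimal_density_def)

lemma ot_val_eq: "0 < \<epsilon> \<Longrightarrow> ot_val Mm Mp c \<epsilon> = Cost (opt_dens \<epsilon>) + \<epsilon> * opt_ent \<epsilon>"
  using optimal_density_opt_dens by (simp add: optimal_density_def obj_def opt_ent_def)

lemma rel_ent_ent_plan: "0 < \<epsilon> \<Longrightarrow> rel_ent (ent_plan Mm Mp c \<epsilon>) PM = ereal (opt_ent \<epsilon>)"
  by (simp add: ent_plan_eq_dens[OF _ optimal_density_opt_dens] rel_ent_dens admissible_opt_dens
      opt_ent_def)

lemma opt_ent_nonneg: "0 < \<epsilon> \<Longrightarrow> 0 \<le> opt_ent \<epsilon>"
  by (simp add: opt_ent_def Ent_nonneg admissible_opt_dens)

lemma opt_ent_supergradient: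
  "y \<in> {0<..} \<Longrightarrow> z \<in> {0<..} \<Longrightarrow> ot_val Mm Mp c z \<le> ot_val Mm Mp c y + (z - y) * opt_ent y"
  using optimal_density_supergradient[OF optimal_density_opt_dens] by (simp add: opt_ent_def)

lemma opt_ent_antimono:
  assumes "0 < x" "x \<le> y"
  shows "opt_ent y \<le> opt_ent x"
  by (rule supergradient_antimono[where S = "{0<..}" and f = "ot_val Mm Mp c"])
    (use assms opt_ent_supergradient in auto)

lemma ot_val_Lipschitz_near:
  assumes "0 < e" "e / 2 \<le> x"
  shows "\<bar>ot_val Mm Mp c x - ot_val Mm Mp c e\<bar> \<le> \<bar>x - e\<bar> * opt_ent (e / 2)"
proof -
  have lower: "(x - e) * opt_ent x \<le> ot_val Mm Mp c x - ot_val Mm Mp c e"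
    using opt_ent_supergradient[of x e] assms by (simp add: algebra_simps)
  have upper: "ot_val Mm Mp c x - ot_val Mm Mp c e \<le> (x - e) * opt_ent e"
    using opt_ent_supergradient[of e x] assms by (simp add: algebra_simps)
  have bound: "\<bar>(x - e) * opt_ent y\<bar> \<le> \<bar>x - e\<bar> * opt_ent (e / 2)" if "e / 2 \<le> y" for y
  proof -
    have "\<bar>opt_ent y\<bar> \<le> opt_ent (e / 2)"
      using that assms opt_ent_nonneg[of y] opt_ent_antimono[of "e / 2" y] by simp
    then show ?thesis
      unfolding abs_mult by (rule mult_left_mono) simp
  qed
  show ?thesis
    using bound[of x, unfolded abs_le_iff] bound[of e, unfolded abs_le_iff] lower upper assms
    unfolding abs_le_iff by linarith
qed

lemma ot_val_continuous:
  assumes "0 < e"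
  shows "isCont (ot_val Mm Mp c) e"
proof -
  have "\<forall>\<^sub>F x in at e. norm (ot_val Mm Mp c x - ot_val Mm Mp c e) \<le> \<bar>x - e\<bar> * opt_ent (e / 2)"
    using eventually_at_pos[OF assms]
    by (rule eventually_mono) (use ot_val_Lipschitz_near[OF assms] in simp)
  moreover have "((\<lambda>x. \<bar>x - e\<bar> * opt_ent (e / 2)) \<longlongrightarrow> \<bar>e - e\<bar> * opt_ent (e / 2)) (at e)"
    by (intro tendsto_intros)
  then have "((\<lambda>x. \<bar>x - e\<bar> * opt_ent (e / 2)) \<longlongrightarrow> 0) (at e)"
    by simp
  ultimately have "((\<lambda>x. ot_val Mm Mp c x - ot_val Mm Mp c e) \<longlongrightarrow> 0) (at e)"
    by (rule Lim_null_comparison)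
  then show ?thesis
    by (simp add: isCont_def LIM_zero_iff)
qed

lemma dist1_opt_dens_sq_le_near:
  assumes "0 < e" "e / 2 < x"
  shows "(dist1 (opt_dens x) (opt_dens e))\<^sup>2 \<le> 4 * opt_ent (e / 2) * \<bar>x - e\<bar> / e"
proof -
  define M where "M = opt_ent (e / 2)"
  have bounded: "0 \<le> opt_ent y \<and> opt_ent y \<le> M" if "e / 2 \<le> y" for y
    using that assms opt_ent_nonneg[of y] opt_ent_antimono[of "e / 2" y] by (simp add: M_def)
  have "\<bar>opt_ent x - opt_ent e\<bar> \<le> M"
    using bounded[of x] bounded[of e] assms by (simp add: abs_le_iff)
  have "(e - x) * (opt_ent x - opt_ent e) \<le> \<bar>(e - x) * (opt_ent x - opt_ent e)\<bar>"
    by (rule abs_ge_self)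
  also have "\<dots> = \<bar>x - e\<bar> * \<bar>opt_ent x - opt_ent e\<bar>"
    by (simp add: abs_mult abs_minus_commute)
  also have "\<dots> \<le> \<bar>x - e\<bar> * M"
    using \<open>\<bar>opt_ent x - opt_ent e\<bar> \<le> M\<close> by (rule mult_left_mono) simp
  finally have "(e - x) * (opt_ent x - opt_ent e) \<le> \<bar>x - e\<bar> * M" .
  moreover have "e * (dist1 (opt_dens e) (opt_dens x))\<^sup>2 \<le> 4 * (e - x) * (opt_ent x - opt_ent e)"
    using optimal_density_dist1[OF optimal_density_opt_dens optimal_density_opt_dens] assms
    by (simp add: opt_ent_def)
  ultimately show ?thesis
    using \<open>0 < e\<close> by (simp add: M_def dist1_commute field_simps)
qed

lemma opt_dens_L1_continuous:
  assumes "0 < e"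
  shows "((\<lambda>x. dist1 (opt_dens x) (opt_dens e)) \<longlongrightarrow> 0) (at e)"
proof (rule Lim_null_comparison)
  show "\<forall>\<^sub>F x in at e.
      norm (dist1 (opt_dens x) (opt_dens e)) \<le> sqrt (4 * opt_ent (e / 2) * \<bar>x - e\<bar> / e)"
    using eventually_at_pos[OF assms]
    by eventually_elim
      (use dist1_opt_dens_sq_le_near[OF assms] dist1_nonneg in \<open>simp add: real_le_rsqrt\<close>)
  have "((\<lambda>x. sqrt (4 * opt_ent (e / 2) * \<bar>x - e\<bar> / e))
      \<longlongrightarrow> sqrt (4 * opt_ent (e / 2) * \<bar>e - e\<bar> / e)) (at e)"
    using assms by (intro tendsto_intros) auto
  then show "((\<lambda>x. sqrt (4 * opt_ent (e / 2) * \<bar>x - e\<bar> / e)) \<longlongrightarrow> 0) (at e)"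
    by simp
qed

text \<open>The supergradient is \<open>opt_ent x = (ot_val x - Cost (opt_dens x)) / x\<close>, and both
  \<open>ot_val\<close> and, through the \<open>L\<^sup>1\<close> continuity of \<open>opt_dens\<close>, \<open>Cost \<circ> opt_dens\<close>
  are continuous.\<close>
lemma opt_ent_continuous:
  assumes "0 < e"
  shows "(opt_ent \<longlongrightarrow> opt_ent e) (at e)"
proof -
  have "((\<lambda>x. Cost (opt_dens x)) \<longlongrightarrow> Cost (opt_dens e)) (at e)"
    using opt_dens_L1_continuous[OF assms] eventually_at_pos[OF assms] assms
    by (intro Cost_tendsto) (auto elim!: eventually_mono intro: admissible_opt_dens)
  moreover have "(ot_val Mm Mp c \<longlongrightarrow> ot_val Mm Mp c e) (at e)"
    using ot_val_continuous[OF assms] by (simp add: isCont_def)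
  ultimately have "((\<lambda>x. (ot_val Mm Mp c x - Cost (opt_dens x)) / x)
      \<longlongrightarrow> (ot_val Mm Mp c e - Cost (opt_dens e)) / e) (at e)"
    using assms by (intro tendsto_intros) auto
  then have "((\<lambda>x. (ot_val Mm Mp c x - Cost (opt_dens x)) / x) \<longlongrightarrow> opt_ent e) (at e)"
    using assms by (simp add: ot_val_eq)
  moreover have "\<forall>\<^sub>F x in at e. (ot_val Mm Mp c x - Cost (opt_dens x)) / x = opt_ent x"
    using eventually_at_pos[OF assms] by eventually_elim (use assms in \<open>simp add: ot_val_eq\<close>)
  ultimately show ?thesis
    by (rule Lim_transform_eventually)
qed

lemma ot_val_has_derivative:
  assumes "0 < \<epsilon>"
  shows "(ot_val Mm Mp c has_real_derivative opt_ent \<epsilon>) (at \<epsilon>)"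
proof -
  have "(ot_val Mm Mp c has_real_derivative opt_ent \<epsilon>) (at \<epsilon> within {0<..})"
    by (rule has_real_derivative_supergradient[OF opt_ent_supergradient])
      (use assms opt_ent_continuous[OF assms] in \<open>auto intro: tendsto_within_subset\<close>)
  then show ?thesis
    using at_within_open[of \<epsilon> "{0<..}"] assms by simp
qed

section \<open>Vanishing regularisation\<close>

lemma optimal_density_0_iff:
  assumes "admissible \<sigma>"
  shows "optimal_density 0 \<sigma> \<longleftrightarrow> dens \<sigma> \<in> opt_plans Mm Mp c"
proof
  assume "optimal_density 0 \<sigma>"
  then show "dens \<sigma> \<in> opt_plans Mm Mp c"
    using assms ot_val_0_le_ot_cost
    by (simp add: opt_plans_def optimal_density_def obj_def admissible_dens_in_couplings
        ot_cost_dens)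
next
  assume opt: "dens \<sigma> \<in> opt_plans Mm Mp c"
  have "(INF \<gamma>\<in>couplings Mm Mp. ent_obj Mm Mp c 0 \<gamma>) = ereal (Cost \<sigma>)"
  proof (rule INF_eqI)
    show "ereal (Cost \<sigma>) \<le> ent_obj Mm Mp c 0 \<gamma>" if "\<gamma> \<in> couplings Mm Mp" for \<gamma>
      using opt that assms
      by (simp add: opt_plans_def ent_obj_def ot_cost_dens zero_ereal_def[symmetric])
  next
    fix y assume "\<And>\<gamma>. \<gamma> \<in> couplings Mm Mp \<Longrightarrow> y \<le> ent_obj Mm Mp c 0 \<gamma>"
    from this[OF admissible_dens_in_couplings[OF assms]] show "y \<le> ereal (Cost \<sigma>)"
      using assms by (simp add: ent_obj_dens obj_def)
  qed
  then show "optimal_density 0 \<sigma>"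
    using assms by (simp add: optimal_density_def ot_val_def obj_def)
qed

lemma optimal_density_0_opt_plans:
  assumes "optimal_density 0 \<rho>"
  shows "dens \<rho> \<in> opt_plans Mm Mp c"
proof -
  have "admissible \<rho>"
    using assms by (simp add: optimal_density_def)
  then show ?thesis
    using optimal_density_0_iff assms by blast
qed

lemma opt_plans_finite_rel_ent:
  assumes "\<gamma> \<in> opt_plans Mm Mp c" "rel_ent \<gamma> PM \<noteq> \<infinity>"
  obtains \<sigma> where "optimal_density 0 \<sigma>" "\<gamma> = dens \<sigma>"
proof -
  obtain \<sigma> where "admissible \<sigma>" "\<gamma> = dens \<sigma>"
    using assms couplings_finite_rel_ent_dens by (auto simp: opt_plans_def)
  with assms(1) show ?thesis
    using that optimal_density_0_iff by blast
qed

lemma optimal_density_0_mid: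
  "optimal_density 0 \<rho> \<Longrightarrow> optimal_density 0 \<sigma> \<Longrightarrow> optimal_density 0 (mid \<rho> \<sigma>)"
  by (simp add: optimal_density_def obj_def admissible_mid Cost_mid)

lemma opt_ent_le_Ent:
  assumes "optimal_density 0 \<sigma>" "0 < \<epsilon>"
  shows "opt_ent \<epsilon> \<le> Ent \<sigma>"
proof -
  have "(dist1 (opt_dens \<epsilon>) \<sigma>)\<^sup>2 \<le> 4 * (Ent \<sigma> - opt_ent \<epsilon>)"
    using dist1_sq_le_Ent_diff[OF optimal_density_opt_dens assms(1)] assms(2)
    by (simp add: opt_ent_def)
  then show ?thesis
    using zero_le_power2[of "dist1 (opt_dens \<epsilon>) \<sigma>"] by argo
qed

lemma dist1_opt_dens_sq_le:
  assumes "0 < x" "0 < y"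
  shows "(dist1 (opt_dens x) (opt_dens y))\<^sup>2 \<le> 4 * \<bar>opt_ent x - opt_ent y\<bar>"
proof (cases x y rule: linorder_cases)
  case less
  have "(dist1 (opt_dens x) (opt_dens y))\<^sup>2 = (dist1 (opt_dens y) (opt_dens x))\<^sup>2"
    by (simp add: dist1_commute)
  also have "\<dots> \<le> 4 * (opt_ent x - opt_ent y)"
    using dist1_sq_le_Ent_diff[of y "opt_dens y" x "opt_dens x"] optimal_density_opt_dens assms less
    by (simp add: opt_ent_def)
  also have "\<dots> \<le> 4 * \<bar>opt_ent x - opt_ent y\<bar>"
    by (intro mult_left_mono abs_ge_self) simp
  finally show ?thesis .
next
  case greater
  have "(dist1 (opt_dens x) (opt_dens y))\<^sup>2 \<le> 4 * (opt_ent y - opt_ent x)"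
    using dist1_sq_le_Ent_diff[of x "opt_dens x" y "opt_dens y"] optimal_density_opt_dens assms
      greater
    by (simp add: opt_ent_def)
  also have "\<dots> \<le> 4 * \<bar>opt_ent x - opt_ent y\<bar>"
    by (intro mult_left_mono) (auto simp: abs_if)
  finally show ?thesis .
qed (simp add: dist1_def)

lemma Cost_opt_dens_tendsto_0:
  assumes \<sigma>: "optimal_density 0 \<sigma>"
  shows "((\<lambda>\<epsilon>. Cost (opt_dens \<epsilon>)) \<longlongrightarrow> ot_val Mm Mp c 0) (at_right 0)"
proof (rule tendsto_sandwich)
  have "ot_val Mm Mp c 0 \<le> Cost (opt_dens \<epsilon>)" if "0 < \<epsilon>" for \<epsilon>
    using optimal_density_supergradient[OF optimal_density_opt_dens[OF that], of 0]
      ot_val_eq[OF that]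
    by (simp add: opt_ent_def)
  then show "\<forall>\<^sub>F \<epsilon> in at_right 0. ot_val Mm Mp c 0 \<le> Cost (opt_dens \<epsilon>)"
    using eventually_at_right_less[of "0::real"] by (auto elim: eventually_mono)
  have "Cost (opt_dens \<epsilon>) \<le> ot_val Mm Mp c 0 + \<epsilon> * Ent \<sigma>" if "0 < \<epsilon>" for \<epsilon>
  proof -
    have "0 \<le> \<epsilon> * opt_ent \<epsilon>"
      using that opt_ent_nonneg[OF that] by simp
    then show ?thesis
      using optimal_density_supergradient[OF \<sigma>, of \<epsilon>] ot_val_eq[OF that] that by simp
  qed
  then show "\<forall>\<^sub>F \<epsilon> in at_right 0. Cost (opt_dens \<epsilon>) \<le> ot_val Mm Mp c 0 + \<epsilon> * Ent \<sigma>"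
    using eventually_at_right_less[of "0::real"] by (auto elim: eventually_mono)
  have "((\<lambda>\<epsilon>. ot_val Mm Mp c 0 + \<epsilon> * Ent \<sigma>) \<longlongrightarrow> ot_val Mm Mp c 0 + 0 * Ent \<sigma>) (at_right 0)"
    by (intro tendsto_intros)
  then show "((\<lambda>\<epsilon>. ot_val Mm Mp c 0 + \<epsilon> * Ent \<sigma>) \<longlongrightarrow> ot_val Mm Mp c 0) (at_right 0)"
    by simp
qed simp

lemma opt_dens_Cauchy_at_0:
  assumes L: "(opt_ent \<longlongrightarrow> L) (at_right 0)" and x: "filterlim x (at_right 0) sequentially"
    "\<And>n. 0 < x n" and "0 < e"
  shows "\<exists>N. \<forall>i\<ge>N. \<forall>j\<ge>N. dist1 (opt_dens (x i)) (opt_dens (x j)) < e"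
proof (rule Cauchy_if_sq_le[OF dist1_nonneg _ _ \<open>0 < e\<close>])
  show "(dist1 (opt_dens (x i)) (opt_dens (x j)))\<^sup>2
      \<le> 4 * \<bar>opt_ent (x i) - L\<bar> + 4 * \<bar>opt_ent (x j) - L\<bar>" for i j
    using dist1_opt_dens_sq_le[OF x(2) x(2), of i j]
      abs_triangle_ineq4[of "opt_ent (x i) - L" "opt_ent (x j) - L"]
    by simp
  show "(\<lambda>n. 4 * \<bar>opt_ent (x n) - L\<bar>) \<longlonglongrightarrow> 0"
    using filterlim_compose[OF L x(1)]
    by (intro tendsto_mult_right_zero tendsto_rabs_zero) (simp add: LIM_zero)
qed

text \<open>As \<open>\<epsilon> \<down> 0\<close>, \<open>opt_ent \<epsilon>\<close> increases to a finite limit, so by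
  \<open>dist1_opt_dens_sq_le\<close> the optimal densities form an \<open>L\<^sup>1\<close>-Cauchy family.\<close>
lemma exists_optimal_density_0_limit:
  assumes \<sigma>: "optimal_density 0 \<sigma>"
  obtains \<rho> where "optimal_density 0 \<rho>" "Ent \<rho> \<le> (SUP \<epsilon>\<in>{0<..}. opt_ent \<epsilon>)"
proof -
  define L where "L = (SUP \<epsilon>\<in>{0<..}. opt_ent \<epsilon>)"
  have L: "(opt_ent \<longlongrightarrow> L) (at_right 0)"
    unfolding L_def using opt_ent_antimono opt_ent_le_Ent[OF \<sigma>]
    by (rule tendsto_at_right_0_SUP_antimono)
  define x where "x n = 1 / real (Suc n)" for n
  have x_pos: "0 < x n" for n
    by (simp add: x_def)
  have "x \<longlonglongrightarrow> 0"
    unfolding x_def[abs_def] using LIMSEQ_Suc[OF lim_inverse_n'] by simp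
  then have x: "filterlim x (at_right 0) sequentially"
    using x_pos by (intro tendsto_imp_filterlim_at_right) simp_all
  define r where "r n = opt_dens (x n)" for n
  have r: "admissible (r n)" for n
    using x_pos by (simp add: r_def admissible_opt_dens)
  have "Ent (r n) \<le> Ent \<sigma>" for n
    using opt_ent_le_Ent[OF \<sigma> x_pos] by (simp add: r_def opt_ent_def)
  then obtain \<rho> where \<rho>: "admissible \<rho>" "(\<lambda>n. dist1 (r n) \<rho>) \<longlonglongrightarrow> 0"
    using admissible_L1_limit[where r = r, OF r] opt_dens_Cauchy_at_0[OF L x x_pos]
    unfolding r_def by blast
  have "(\<lambda>n. Ent (r n)) \<longlonglongrightarrow> L"
    using filterlim_compose[OF L x] by (simp add: r_def opt_ent_def)
  then have "Ent \<rho> \<le> L"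
    using Ent_lower_semicontinuous[where r = r, OF r \<rho> order_refl] by blast
  have "(\<lambda>n. Cost (r n)) \<longlonglongrightarrow> Cost \<rho>"
    using r \<rho> by (intro Cost_tendsto) auto
  moreover have "(\<lambda>n. Cost (r n)) \<longlonglongrightarrow> ot_val Mm Mp c 0"
    using filterlim_compose[OF Cost_opt_dens_tendsto_0[OF \<sigma>] x] by (simp add: r_def)
  ultimately have "optimal_density 0 \<rho>"
    using \<rho>(1) LIMSEQ_unique by (auto simp: optimal_density_def obj_def)
  with \<open>Ent \<rho> \<le> L\<close> show ?thesis
    using that by (simp add: L_def)
qed

lemma exists_least_entropy_density:
  assumes "optimal_density 0 \<sigma>0"
  obtains \<rho> where "optimal_density 0 \<rho>" "\<And>\<sigma>. optimal_density 0 \<sigma> \<Longrightarrow> Ent \<rho> \<le> Ent \<sigma>"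
    "(opt_ent \<longlongrightarrow> Ent \<rho>) (at_right 0)"
proof -
  obtain \<rho> where \<rho>: "optimal_density 0 \<rho>" "Ent \<rho> \<le> (SUP \<epsilon>\<in>{0<..}. opt_ent \<epsilon>)"
    using exists_optimal_density_0_limit[OF assms] by blast
  have SUP_le: "(SUP \<epsilon>\<in>{0<..}. opt_ent \<epsilon>) \<le> Ent \<sigma>" if "optimal_density 0 \<sigma>" for \<sigma>
    using opt_ent_le_Ent[OF that] by (intro cSUP_least) auto
  then have "Ent \<rho> = (SUP \<epsilon>\<in>{0<..}. opt_ent \<epsilon>)"
    using \<rho> by (simp add: order_antisym)
  moreover have "(opt_ent \<longlongrightarrow> (SUP \<epsilon>\<in>{0<..}. opt_ent \<epsilon>)) (at_right 0)"
    using opt_ent_antimono opt_ent_le_Ent[OF assms] by (rule tendsto_at_right_0_SUP_antimono)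
  ultimately show ?thesis
    using that \<rho>(1) SUP_le by simp
qed

lemma dist1_opt_dens_tendsto_0:
  assumes "optimal_density 0 \<rho>" "(opt_ent \<longlongrightarrow> Ent \<rho>) (at_right 0)"
  shows "((\<lambda>\<epsilon>. dist1 (opt_dens \<epsilon>) \<rho>) \<longlongrightarrow> 0) (at_right 0)"
proof (rule Lim_null_comparison)
  have "norm (dist1 (opt_dens \<epsilon>) \<rho>) \<le> sqrt (4 * (Ent \<rho> - opt_ent \<epsilon>))" if "0 < \<epsilon>" for \<epsilon>
    using dist1_sq_le_Ent_diff[OF optimal_density_opt_dens[OF that] assms(1) order_refl that]
      dist1_nonneg
    by (simp add: opt_ent_def real_le_rsqrt)
  then show "\<forall>\<^sub>F \<epsilon> in at_right 0. norm (dist1 (opt_dens \<epsilon>) \<rho>) \<le> sqrt (4 * (Ent \<rho> - opt_ent \<epsilon>))"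
    using eventually_at_right_less[of "0::real"] by (auto elim: eventually_mono)
  have "((\<lambda>\<epsilon>. sqrt (4 * (Ent \<rho> - opt_ent \<epsilon>))) \<longlongrightarrow> sqrt (4 * (Ent \<rho> - Ent \<rho>))) (at_right 0)"
    using assms(2) by (intro tendsto_intros)
  then show "((\<lambda>\<epsilon>. sqrt (4 * (Ent \<rho> - opt_ent \<epsilon>))) \<longlongrightarrow> 0) (at_right 0)"
    by simp
qed

lemma narrow_tendsto_ent_plan:
  assumes "optimal_density 0 \<rho>" "(opt_ent \<longlongrightarrow> Ent \<rho>) (at_right 0)"
  shows "narrow_tendsto (ent_plan Mm Mp c) (dens \<rho>) (at_right 0)"
  unfolding narrow_tendsto_def
proof (intro allI impI)
  fix f :: "'a \<times> 'a \<Rightarrow> real"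
  assume f: "continuous_on UNIV f \<and> bounded (range f)"
  then have f_measurable: "f \<in> borel_measurable PM"
    by (simp add: borel_measurable_PM borel_measurable_continuous_onI)
  obtain B where B: "\<And>z. \<bar>f z\<bar> \<le> B"
    using f by (auto simp: bounded_iff)
  have integral_dens: "(\<integral>z. f z \<partial>dens \<sigma>) = (\<integral>z. \<sigma> z * f z \<partial>PM)" if "admissible \<sigma>" for \<sigma>
    unfolding dens_def using that f_measurable
    by (subst integral_density) (auto simp: admissible_measurable admissible_nonneg)
  have \<rho>: "admissible \<rho>"
    using assms(1) by (simp add: optimal_density_def)
  have "\<forall>\<^sub>F \<epsilon> in at_right 0. 0 < (\<epsilon>::real)"
    by (rule eventually_at_right_less)
  then have "\<forall>\<^sub>F \<epsilon> in at_right 0. (\<integral>z. opt_dens \<epsilon> z * f z \<partial>PM) = (\<integral>z. f z \<partial>ent_plan Mm Mp c \<epsilon>)"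
    by eventually_elim
      (simp add: ent_plan_eq_dens[OF _ optimal_density_opt_dens] integral_dens admissible_opt_dens)
  moreover have "((\<lambda>\<epsilon>. \<integral>z. opt_dens \<epsilon> z * f z \<partial>PM) \<longlongrightarrow> (\<integral>z. \<rho> z * f z \<partial>PM)) (at_right 0)"
    using dist1_opt_dens_tendsto_0[OF assms] \<open>\<forall>\<^sub>F \<epsilon> in at_right 0. 0 < \<epsilon>\<close> \<rho> f_measurable B
    by (intro integral_mult_tendsto_L1)
      (auto elim!: eventually_mono simp: admissible_integrable admissible_opt_dens dist1_def)
  ultimately show "((\<lambda>\<epsilon>. \<integral>z. f z \<partial>ent_plan Mm Mp c \<epsilon>) \<longlongrightarrow> (\<integral>z. f z \<partial>dens \<rho>)) (at_right 0)"
    using integral_dens[OF \<rho>] by (simp add: Lim_transform_eventually)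
qed

lemma INF_rel_ent_opt_plans:
  assumes "optimal_density 0 \<rho>" "\<And>\<sigma>. optimal_density 0 \<sigma> \<Longrightarrow> Ent \<rho> \<le> Ent \<sigma>"
  shows "(INF \<gamma>\<in>opt_plans Mm Mp c. rel_ent \<gamma> PM) = ereal (Ent \<rho>)"
proof (rule INF_eqI)
  show "ereal (Ent \<rho>) \<le> rel_ent \<gamma> PM" if "\<gamma> \<in> opt_plans Mm Mp c" for \<gamma>
  proof (cases "rel_ent \<gamma> PM = \<infinity>")
    case False
    then obtain \<sigma> where "optimal_density 0 \<sigma>" "\<gamma> = dens \<sigma>"
      using opt_plans_finite_rel_ent \<open>\<gamma> \<in> opt_plans Mm Mp c\<close> by blast
    then show ?thesis
      using assms(2) by (simp add: rel_ent_dens optimal_density_def)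
  qed simp
  have "dens \<rho> \<in> opt_plans Mm Mp c"
    using assms(1) by (rule optimal_density_0_opt_plans)
  then show "y \<le> ereal (Ent \<rho>)" if "\<And>\<gamma>. \<gamma> \<in> opt_plans Mm Mp c \<Longrightarrow> y \<le> rel_ent \<gamma> PM" for y
    using that assms(1) by (force simp: rel_ent_dens optimal_density_def)
qed

lemma least_entropy_plan_unique:
  assumes \<rho>: "optimal_density 0 \<rho>" "\<And>\<sigma>. optimal_density 0 \<sigma> \<Longrightarrow> Ent \<rho> \<le> Ent \<sigma>"
    and \<gamma>: "\<gamma> \<in> opt_plans Mm Mp c" "rel_ent \<gamma> PM = ereal (Ent \<rho>)"
  shows "\<gamma> = dens \<rho>"
proof -
  have "rel_ent \<gamma> PM \<noteq> \<infinity>"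
    using \<gamma>(2) by simp
  then obtain \<sigma> where \<sigma>: "optimal_density 0 \<sigma>" "\<gamma> = dens \<sigma>"
    using opt_plans_finite_rel_ent[OF \<gamma>(1)] by blast
  have adm: "admissible \<rho>" "admissible \<sigma>"
    using \<rho>(1) \<sigma>(1) by (simp_all add: optimal_density_def)
  have "Ent \<sigma> = Ent \<rho>"
    using \<gamma>(2) \<sigma>(2) adm by (simp add: rel_ent_dens)
  moreover have "Ent \<rho> \<le> Ent (mid \<sigma> \<rho>)"
    using \<rho>(2)[OF optimal_density_0_mid[OF \<sigma>(1) \<rho>(1)]] .
  ultimately have "(dist1 \<sigma> \<rho>)\<^sup>2 \<le> 0"
    using Ent_mid[OF adm(2,1)] by argo
  then show ?thesis
    using dens_eq_if_dist1_eq_0[OF adm(2,1)] \<sigma>(2) by simp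
qed

lemma ot_val_right_differentiable:
  assumes \<rho>: "optimal_density 0 \<rho>" and lim: "(opt_ent \<longlongrightarrow> Ent \<rho>) (at_right 0)"
  shows "\<exists>v'. v' 0 = Ent \<rho> \<and> continuous_on {0..} v' \<and>
    (\<forall>\<epsilon>\<ge>0. (ot_val Mm Mp c has_real_derivative v' \<epsilon>) (at \<epsilon> within {0..}))"
proof -
  define g where "g = (\<lambda>\<epsilon>. if \<epsilon> = 0 then Ent \<rho> else opt_ent \<epsilon>)"
  have g_tendsto: "(g \<longlongrightarrow> g x) (at x within {0..})" if "0 \<le> x" for x
  proof (cases "x = 0")
    case True
    have "\<forall>\<^sub>F y in at_right 0. opt_ent y = g y"
      by (auto simp: g_def eventually_at_filter)
    with lim True show ?thesis
      by (simp add: at_within_Ici_at_right g_def tendsto_cong)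
  next
    case False
    with that have "0 < x" by simp
    have "\<forall>\<^sub>F y in at x. opt_ent y = g y"
      using eventually_at_pos[OF \<open>0 < x\<close>] by eventually_elim (use \<open>0 < x\<close> in \<open>simp add: g_def\<close>)
    then have "(g \<longlongrightarrow> g x) (at x)"
      using opt_ent_continuous[OF \<open>0 < x\<close>] False by (simp add: g_def tendsto_cong)
    then show ?thesis
      by (rule tendsto_within_subset) simp
  qed
  have supergradient: "ot_val Mm Mp c z \<le> ot_val Mm Mp c y + (z - y) * g y"
    if "y \<in> {0..}" "z \<in> {0..}" for y z
  proof (cases "y = 0")
    case True
    then show ?thesis
      using optimal_density_supergradient[OF \<rho>, of z] that by (simp add: g_def)
  next
    case False
    with that have "0 < y" by simp
    then show ?thesis
      using optimal_density_supergradient[OF optimal_density_opt_dens[OF \<open>0 < y\<close>], of z] that False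
      by (simp add: g_def opt_ent_def)
  qed
  have "(ot_val Mm Mp c has_real_derivative g \<epsilon>) (at \<epsilon> within {0..})" if "0 \<le> \<epsilon>" for \<epsilon>
    using supergradient by (rule has_real_derivative_supergradient) (use that g_tendsto in auto)
  then show ?thesis
    using g_tendsto by (intro exI[of _ g]) (auto simp: g_def continuous_on_def)
qed

theorem ot_val_derivative_pos:
  "\<forall>\<epsilon>>0. \<exists>D. rel_ent (ent_plan Mm Mp c \<epsilon>) PM = ereal D \<and>
    (ot_val Mm Mp c has_real_derivative D) (at \<epsilon>)"
  using rel_ent_ent_plan ot_val_has_derivative by blast

theorem ot_val_derivative_at_0:
  assumes "\<exists>\<gamma>0\<in>opt_plans Mm Mp c. rel_ent \<gamma>0 PM < \<infinity>"
  shows "\<exists>v' D. (INF \<gamma>\<in>opt_plans Mm Mp c. rel_ent \<gamma> PM) = ereal D \<and> v' 0 = D \<and>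
      (\<forall>\<epsilon>\<ge>0. (ot_val Mm Mp c has_real_derivative v' \<epsilon>) (at \<epsilon> within {0..})) \<and>
      continuous_on {0..} v' \<and>
      ((\<lambda>\<epsilon>. (ot_val Mm Mp c \<epsilon> - ot_val Mm Mp c 0 - \<epsilon> * D) / \<epsilon>) \<longlongrightarrow> 0) (at_right 0) \<and>
      (\<exists>!\<gamma>s. \<gamma>s \<in> opt_plans Mm Mp c \<and> rel_ent \<gamma>s PM = (INF \<gamma>\<in>opt_plans Mm Mp c. rel_ent \<gamma> PM)) \<and>
      narrow_tendsto (ent_plan Mm Mp c)
        (THE \<gamma>s. \<gamma>s \<in> opt_plans Mm Mp c \<and> rel_ent \<gamma>s PM = (INF \<gamma>\<in>opt_plans Mm Mp c. rel_ent \<gamma> PM))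
        (at_right 0)"
proof -
  from assms obtain \<gamma>0 where "\<gamma>0 \<in> opt_plans Mm Mp c" "rel_ent \<gamma>0 PM \<noteq> \<infinity>"
    by auto
  then obtain \<sigma>0 where "optimal_density 0 \<sigma>0"
    by (rule opt_plans_finite_rel_ent)
  then obtain \<rho> where \<rho>: "optimal_density 0 \<rho>" "\<And>\<sigma>. optimal_density 0 \<sigma> \<Longrightarrow> Ent \<rho> \<le> Ent \<sigma>"
    and lim: "(opt_ent \<longlongrightarrow> Ent \<rho>) (at_right 0)"
    by (rule exists_least_entropy_density) auto
  obtain v' where v': "v' 0 = Ent \<rho>" "continuous_on {0..} v'"
    "\<forall>\<epsilon>\<ge>0. (ot_val Mm Mp c has_real_derivative v' \<epsilon>) (at \<epsilon> within {0..})"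
    using ot_val_right_differentiable[OF \<rho>(1) lim] by blast
  then have "((\<lambda>\<epsilon>. (ot_val Mm Mp c \<epsilon> - ot_val Mm Mp c 0 - \<epsilon> * Ent \<rho>) / \<epsilon>) \<longlongrightarrow> 0) (at_right 0)"
    using right_derivative_remainder by fastforce
  moreover have opt: "dens \<rho> \<in> opt_plans Mm Mp c" and rel: "rel_ent (dens \<rho>) PM = ereal (Ent \<rho>)"
    using \<rho>(1) optimal_density_0_opt_plans by (simp_all add: rel_ent_dens optimal_density_def)
  then have "\<exists>!\<gamma>s. \<gamma>s \<in> opt_plans Mm Mp c \<and> rel_ent \<gamma>s PM = ereal (Ent \<rho>)"
    and "(THE \<gamma>s. \<gamma>s \<in> opt_plans Mm Mp c \<and> rel_ent \<gamma>s PM = ereal (Ent \<rho>)) = dens \<rho>"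
    using least_entropy_plan_unique[OF \<rho>] by blast+
  ultimately show ?thesis
    using INF_rel_ent_opt_plans[OF \<rho>] v' narrow_tendsto_ent_plan[OF \<rho>(1) lim]
    by (intro exI[of _ v'] exI[of _ "Ent \<rho>"] conjI) simp_all
qed

end

theorem corollary2p4:
  fixes Mm Mp :: "'a::euclidean_space measure"
    and c :: "'a \<times> 'a \<Rightarrow> real"
  assumes "prob_space Mm" and "sets Mm = sets borel"
    and "prob_space Mp" and "sets Mp = sets borel"
    and "compact (mu_support Mm)" and "compact (mu_support Mp)"
    and "continuous_on (mu_support Mm \<times> mu_support Mp) c"
  shows "(\<forall>\<epsilon>>0. \<exists>D. rel_ent (ent_plan Mm Mp c \<epsilon>) (Mm \<Otimes>\<^sub>M Mp) = ereal D \<and>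
                   (ot_val Mm Mp c has_real_derivative D) (at \<epsilon>))
     \<and> ((\<exists>\<gamma>0\<in>opt_plans Mm Mp c. rel_ent \<gamma>0 (Mm \<Otimes>\<^sub>M Mp) < \<infinity>) \<longrightarrow>
         (\<exists>v' D. (INF \<gamma>\<in>opt_plans Mm Mp c. rel_ent \<gamma> (Mm \<Otimes>\<^sub>M Mp)) = ereal D \<and>
            v' 0 = D \<and>
            (\<forall>\<epsilon>\<ge>0. (ot_val Mm Mp c has_real_derivative v' \<epsilon>) (at \<epsilon> within {0..})) \<and>
            continuous_on {0..} v' \<and>
            ((\<lambda>\<epsilon>. (ot_val Mm Mp c \<epsilon> - ot_val Mm Mp c 0 - \<epsilon> * D) / \<epsilon>) \<longlongrightarrow> 0) (at_right 0) \<and>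
            (\<exists>!\<gamma>s. \<gamma>s \<in> opt_plans Mm Mp c \<and>
                    rel_ent \<gamma>s (Mm \<Otimes>\<^sub>M Mp) = (INF \<gamma>\<in>opt_plans Mm Mp c. rel_ent \<gamma> (Mm \<Otimes>\<^sub>M Mp))) \<and>
            narrow_tendsto (ent_plan Mm Mp c)
              (THE \<gamma>s. \<gamma>s \<in> opt_plans Mm Mp c \<and>
                    rel_ent \<gamma>s (Mm \<Otimes>\<^sub>M Mp) = (INF \<gamma>\<in>opt_plans Mm Mp c. rel_ent \<gamma> (Mm \<Otimes>\<^sub>M Mp)))
              (at_right 0)))"
proof -
  interpret entropic_ot Mm Mp c
    by (rule entropic_ot.intro) (fact assms)+
  show ?thesis
    using ot_val_derivative_pos ot_val_derivative_at_0 by blast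
qed

end
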